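(* Let $0<\Delta\le1$ and $T=\frac{\lambda_1}{2\Delta}\ln\frac1\Delta$. There exist constants $C_5,C_6>0$, independent of $P$ and $\Delta$, such that for all $P>0$ the quantizer $q_o$ with these parameters satisfies $$\mathtt{out}_{{\rm loss},q_o}\le C_5\,e^{-C_6/P}\,\frac{1+\sqrt P}{P}\,\Delta^{1/2}.$$
   Context: $H_1,H_2$ are independent exponential random variables with means $\lambda_1\ge\lambda_2>0$ (density $e^{-x/\lambda_i}/\lambda_i$, $x>0$); $P>0$ is total power; $r_{\rm th}>0$ is a fixed target rate. For $a\ge b\ge0$, $a>0$, let $A(a,b)=\frac{2b}{\sqrt{(a+b)^2+4ab^2P}+a+b}$. Full CSI: $r_{\max}=\log_2(1+PH_1A(H_1,H_2))$ if $H_1\ge H_2$, $r_{\max}=\log_2(1+PH_2A(H_2,H_1))$ if $H_1<H_2$; $\mathtt{out}_{\min}=\Pr\{r_{\max}<r_{\rm th}\}$. Quantizer with $\Delta>0$, $T\ge0$: $q_o(x)=\lceil x/\Delta\rceil\Delta$ for $x\le T\Delta$, $q_o(x)=(T+1)\Delta$ for $x>T\Delta$. Let $a_i=q_o(H_i)$; if $a_1\ge a_2$ let $(s,w)=(1,2)$, otherwise $(s,w)=(2,1)$; $\alpha_q=A(a_s,a_w)$ if $a_1,a_2>0$, else $\alpha_q=0$. Actual rates $R_s=\log_2(1+P\alpha_qH_s)$, $R_w=\log_2\big(1+\frac{PH_w(1-\alpha_q)}{PH_w\alpha_q+1}\big)$, $r_q=\min\{R_1,R_2\}$, $\mathtt{out}_q=\Pr\{r_q<r_{\rm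 th}\}$, $\mathtt{out}_{{\rm loss},q_o}=\mathtt{out}_q-\mathtt{out}_{\min}$. *)

theory Defs
  imports "HOL-Analysis.Analysis"
begin

definition Afun :: "real \<Rightarrow> real \<Rightarrow> real \<Rightarrow> real" where
  "Afun P a b = 2 * b / (sqrt ((a + b)^2 + 4 * a * b^2 * P) + a + b)"

definition rmax :: "real \<Rightarrow> real \<Rightarrow> real \<Rightarrow> real" where
  "rmax P h1 h2 = (if h1 \<ge> h2 then log 2 (1 + P * h1 * Afun P h1 h2)
                   else log 2 (1 + P * h2 * Afun P h2 h1))"

definition qo :: "real \<Rightarrow> real \<Rightarrow> real \<Rightarrow> real" where
  "qo \<Delta> T x = (if x \<le> T * \<Delta> then of_int \<lceil>x / \<Delta>\<rceil> * \<Delta> else (T + 1) * \<Delta>)"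

definition alpha_q :: "real \<Rightarrow> real \<Rightarrow> real \<Rightarrow> real \<Rightarrow> real \<Rightarrow> real" where
  "alpha_q P \<Delta> T h1 h2 =
     (let a1 = qo \<Delta> T h1; a2 = qo \<Delta> T h2 in
      if a1 > 0 \<and> a2 > 0 then (if a1 \<ge> a2 then Afun P a1 a2 else Afun P a2 a1) else 0)"

definition rq :: "real \<Rightarrow> real \<Rightarrow> real \<Rightarrow> real \<Rightarrow> real \<Rightarrow> real" where
  "rq P \<Delta> T h1 h2 =
     (let a1 = qo \<Delta> T h1; a2 = qo \<Delta> T h2; al = alpha_q P \<Delta> T h1 h2;
          hs = (if a1 \<ge> a2 then h1 else h2); hw = (if a1 \<ge> a2 then h2 else h1);
          Rs = log 2 (1 + P * al * hs);
          Rw = log 2 (1 + P * hw * (1 - al) / (P * hw * al + 1))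
      in min Rs Rw)"

definition exp_dens :: "real \<Rightarrow> real \<Rightarrow> real" where
  "exp_dens l x = (if x > 0 then exp (- x / l) / l else 0)"

definition chan :: "real \<Rightarrow> real \<Rightarrow> (real \<times> real) measure" where
  "chan l1 l2 = density (lborel \<Otimes>\<^sub>M lborel) (\<lambda>(x, y). ennreal (exp_dens l1 x * exp_dens l2 y))"

definition out_min :: "real \<Rightarrow> real \<Rightarrow> real \<Rightarrow> real \<Rightarrow> real" where
  "out_min l1 l2 P rth = measure (chan l1 l2) {(h1, h2). rmax P h1 h2 < rth}"

definition out_q :: "real \<Rightarrow> real \<Rightarrow> real \<Rightarrow> real \<Rightarrow> real \<Rightarrow> real \<Rightarrow> real" where
  "out_q l1 l2 P rth \<Delta> T = measure (chan l1 l2) {(h1, h2). rq P \<Delta> T h1 h2 < rth}"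

definition out_loss :: "real \<Rightarrow> real \<Rightarrow> real \<Rightarrow> real \<Rightarrow> real \<Rightarrow> real \<Rightarrow> real" where
  "out_loss l1 l2 P rth \<Delta> T = out_q l1 l2 P rth \<Delta> T - out_min l1 l2 P rth"

end

theory Submission
  imports Defs "HOL-Real_Asymp.Real_Asymp"
begin

text \<open>
  The outage loss is at most the probability of the event that the quantized allocation fails
  while the full-CSI allocation succeeds. On that event both gains exceed \<open>\<gamma> / P\<close>, where
  \<open>\<gamma> = 2 powr rth - 1\<close>, and the pair of gains lies beyond the saturation level \<open>M = T \<Delta>\<close> of the
  quantizer, within \<open>\<Delta>\<close> of the diagonal, within \<open>O(\<Delta>)\<close> of an axis, or within \<open>O(\<Delta>)\<close> of the
  curve on which the full-CSI SINR equals \<open>\<gamma>\<close>. The exponential tails beyond \<open>\<gamma> / P\<close> contribute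
  the factor \<open>exp (- \<gamma> / (P l1))\<close>, every strip of width \<open>O(\<Delta>)\<close> has probability \<open>O(\<Delta>)\<close>, and the
  choice of \<open>T\<close> makes the tail beyond \<open>M\<close> equal to \<open>sqrt \<Delta>\<close>. For large \<open>P\<close> one of the SNRs \<open>P h\<close>
  is moreover \<open>O(1 + sqrt (\<Delta> P))\<close>, so the strips can also be cut to width \<open>O(1 / P)\<close>, and
  \<open>min a b \<le> sqrt (a b)\<close> trades the factor \<open>\<Delta>\<close> for \<open>sqrt \<Delta> / sqrt P\<close>.
\<close>

section \<open>Independent exponential gains\<close>

lemma exp_dens_nonneg: "0 < l \<Longrightarrow> 0 \<le> exp_dens l x"
  by (simp add: exp_dens_def)

lemma exp_dens_measurable [measurable]: "exp_dens l \<in> borel_measurable borel"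
  unfolding exp_dens_def by measurable

lemma exp_dens_le: "0 < l \<Longrightarrow> m \<le> x \<Longrightarrow> exp_dens l x \<le> exp (- m / l) / l"
  by (auto simp: exp_dens_def divide_right_mono)

lemma nn_integral_exp_dens_tail:
  assumes l: "0 < l"
  shows "(\<integral>\<^sup>+x. ennreal (exp_dens l x) * indicator {x0..} x \<partial>lborel) \<le> ennreal (exp (- x0 / l))"
proof -
  have "(\<integral>\<^sup>+x. ennreal (exp_dens l x) * indicator {x0..} x \<partial>lborel)
      \<le> (\<integral>\<^sup>+x. ennreal (exp (- x / l) / l) * indicator {x0..} x \<partial>lborel)"
    by (rule nn_integral_mono) (auto simp: exp_dens_def split: split_indicator)
  also have "\<dots> = ennreal (0 - (- exp (- x0 / l)))"
  proof (rule nn_integral_FTC_atLeast)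
    show "((\<lambda>x. - exp (- x / l)) \<longlongrightarrow> 0) at_top"
      using l by real_asymp
    show "((\<lambda>x. - exp (- x / l)) has_real_derivative exp (- x / l) / l) (at x)" for x
      using l by (auto intro!: derivative_eq_intros)
  qed (use l in auto)
  finally show ?thesis by simp
qed

lemma sets_chan [simp, measurable_cong]: "sets (chan l1 l2) = sets (borel \<Otimes>\<^sub>M borel)"
  unfolding chan_def by (simp add: sets_pair_measure_cong[OF sets_lborel sets_lborel])

lemma pred_pair_set_borel:
  "Measurable.pred (borel \<Otimes>\<^sub>M borel) (\<lambda>z. Q (fst z) (snd z)) \<Longrightarrow>
    {(x, y). Q x y} \<in> sets (borel \<Otimes>\<^sub>M borel)"
proof -
  assume "Measurable.pred (borel \<Otimes>\<^sub>M borel) (\<lambda>z. Q (fst z) (snd z))"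
  moreover have "{(x, y). Q x y} = {z \<in> space (borel \<Otimes>\<^sub>M borel). Q (fst z) (snd z)}"
    by (auto simp: space_pair_measure)
  ultimately show ?thesis by simp
qed

lemma emeasure_chan_density:
  assumes [measurable]: "S \<in> sets (borel \<Otimes>\<^sub>M borel)"
  shows "emeasure (chan l1 l2) S =
    (\<integral>\<^sup>+z. ennreal (exp_dens l1 (fst z) * exp_dens l2 (snd z)) * indicator S z \<partial>(lborel \<Otimes>\<^sub>M lborel))"
  unfolding chan_def by (subst emeasure_density) (simp_all add: case_prod_beta)

lemma emeasure_chan:
  assumes [measurable]: "S \<in> sets (borel \<Otimes>\<^sub>M borel)"
  shows "emeasure (chan l1 l2) S =
    (\<integral>\<^sup>+x. \<integral>\<^sup>+y. ennreal (exp_dens l1 x * exp_dens l2 y) * indicator S (x, y) \<partial>lborel \<partial>lborel)"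
  unfolding emeasure_chan_density[OF assms] by (subst lborel.nn_integral_fst[symmetric]) simp_all

lemma emeasure_chan_swap:
  assumes [measurable]: "{(x, y). Q x y} \<in> sets (borel \<Otimes>\<^sub>M borel)"
  shows "emeasure (chan l1 l2) {(x, y). Q x y} = emeasure (chan l2 l1) {(y, x). Q x y}"
proof -
  have "(\<lambda>(y, x). (x, y)) -` {(x, y). Q x y} \<inter> space (borel \<Otimes>\<^sub>M borel) \<in> sets (borel \<Otimes>\<^sub>M borel)"
    by (rule measurable_sets[OF measurable_pair_swap' assms])
  moreover have "(\<lambda>(y, x). (x, y)) -` {(x, y). Q x y} \<inter> space (borel \<Otimes>\<^sub>M borel) = {(y, x). Q x y}"
    by (auto simp: space_pair_measure)
  ultimately have swapped: "{(y, x). Q x y} \<in> sets (borel \<Otimes>\<^sub>M borel)"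
    by simp
  have "(\<lambda>(x, y). ennreal (exp_dens l1 x * exp_dens l2 y) * indicator {(x, y). Q x y} (x, y))
      \<in> borel_measurable (lborel \<Otimes>\<^sub>M lborel)"
    by measurable
  from lborel_pair.Fubini'[OF this] show ?thesis
    unfolding emeasure_chan[OF assms] emeasure_chan[OF swapped]
    by (simp add: mult.commute indicator_def)
qed

lemma emeasure_chan_strip:
  assumes l1: "0 < l1" and l2: "0 < l2" and w: "0 \<le> w"
    and f [measurable]: "f \<in> borel_measurable borel" and fm: "\<And>x. m \<le> f x"
  shows "emeasure (chan l1 l2) {(x, y). x0 \<le> x \<and> f x \<le> y \<and> y \<le> f x + w}
     \<le> ennreal (exp (- x0 / l1) * (exp (- m / l2) / l2 * w))"
proof -
  let ?S = "{(x, y). x0 \<le> x \<and> f x \<le> y \<and> y \<le> f x + w}"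
  let ?c = "exp (- m / l2) / l2"
  have S: "?S \<in> sets (borel \<Otimes>\<^sub>M borel)"
    by (rule pred_pair_set_borel) measurable
  have pointwise: "ennreal (exp_dens l1 x * exp_dens l2 y) * indicator ?S (x, y)
      \<le> ennreal (exp_dens l1 x) * indicator {x0..} x * (ennreal ?c * indicator {f x..f x + w} y)" for x y
  proof (cases "(x, y) \<in> ?S")
    case True
    then have "exp_dens l2 y \<le> ?c"
      using exp_dens_le[OF l2, of m y] fm[of x] by auto
    then have "exp_dens l1 x * exp_dens l2 y \<le> exp_dens l1 x * ?c"
      using exp_dens_nonneg[OF l1] by (intro mult_left_mono)
    then show ?thesis
      using True exp_dens_nonneg[OF l1] l2 by (simp add: ennreal_leI flip: ennreal_mult)
  qed simp
  have "emeasure (chan l1 l2) ?S \<le> (\<integral>\<^sup>+x. ennreal (exp_dens l1 x) * indicator {x0..} x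
      * (\<integral>\<^sup>+y. ennreal ?c * indicator {f x..f x + w} y \<partial>lborel) \<partial>lborel)"
    unfolding emeasure_chan[OF S]
    by (intro nn_integral_mono order_trans[OF nn_integral_mono[OF pointwise]])
      (simp add: nn_integral_cmult)
  also have "\<dots> = (\<integral>\<^sup>+x. ennreal (exp_dens l1 x) * indicator {x0..} x * ennreal (?c * w) \<partial>lborel)"
    using w l2 by (simp add: nn_integral_cmult_indicator flip: ennreal_mult)
  also have "\<dots> = (\<integral>\<^sup>+x. ennreal (exp_dens l1 x) * indicator {x0..} x \<partial>lborel) * ennreal (?c * w)"
    by (rule nn_integral_multc) measurable
  also have "\<dots> \<le> ennreal (exp (- x0 / l1)) * ennreal (?c * w)"
    by (intro mult_right_mono nn_integral_exp_dens_tail l1) simp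
  also have "\<dots> = ennreal (exp (- x0 / l1) * (?c * w))"
    using w l2 by (subst ennreal_mult) auto
  finally show ?thesis .
qed

lemma emeasure_chan_quadrant:
  assumes l1: "0 < l1" and l2: "0 < l2"
  shows "emeasure (chan l1 l2) {(x, y). x0 \<le> x \<and> y0 \<le> y} \<le> ennreal (exp (- x0 / l1) * exp (- y0 / l2))"
proof -
  let ?S = "{(x, y). x0 \<le> x \<and> y0 \<le> y}"
  have S: "?S \<in> sets (borel \<Otimes>\<^sub>M borel)"
    by (rule pred_pair_set_borel) measurable
  have "emeasure (chan l1 l2) ?S
      = (\<integral>\<^sup>+x. ennreal (exp_dens l1 x) * indicator {x0..} x
           * (\<integral>\<^sup>+y. ennreal (exp_dens l2 y) * indicator {y0..} y \<partial>lborel) \<partial>lborel)"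
    unfolding emeasure_chan[OF S] using exp_dens_nonneg[OF l1] exp_dens_nonneg[OF l2]
    by (auto intro!: nn_integral_cong simp: nn_integral_cmult[symmetric] ennreal_mult
        split: split_indicator)
  also have "\<dots> \<le> (\<integral>\<^sup>+x. ennreal (exp_dens l1 x) * indicator {x0..} x * ennreal (exp (- y0 / l2)) \<partial>lborel)"
    by (intro nn_integral_mono mult_left_mono nn_integral_exp_dens_tail l2) simp
  also have "\<dots> = (\<integral>\<^sup>+x. ennreal (exp_dens l1 x) * indicator {x0..} x \<partial>lborel) * ennreal (exp (- y0 / l2))"
    by (rule nn_integral_multc) measurable
  also have "\<dots> \<le> ennreal (exp (- x0 / l1)) * ennreal (exp (- y0 / l2))"
    by (intro mult_right_mono nn_integral_exp_dens_tail l1) simp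
  finally show ?thesis
    by (simp add: ennreal_mult)
qed

lemma emeasure_chan_nonpos_null: "emeasure (chan l1 l2) {(x, y). x \<le> 0 \<or> y \<le> 0} = 0"
proof -
  have S: "{(x::real, y::real). x \<le> 0 \<or> y \<le> 0} \<in> sets (borel \<Otimes>\<^sub>M borel)"
    by (rule pred_pair_set_borel) measurable
  have zero: "ennreal (exp_dens l1 x * exp_dens l2 y) * indicator {(x, y). x \<le> 0 \<or> y \<le> 0} (x, y) = 0"
    for x y :: real
    by (auto simp: exp_dens_def indicator_def)
  show ?thesis
    unfolding emeasure_chan[OF S] zero by simp
qed

lemma finite_measure_chan:
  assumes l1: "0 < l1" and l2: "0 < l2"
  shows "finite_measure (chan l1 l2)"
proof (rule finite_measureI)
  have S: "{(x::real, y::real). 0 \<le> x \<and> 0 \<le> y} \<in> sets (chan l1 l2)"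
          "{(x::real, y::real). x \<le> 0 \<or> y \<le> 0} \<in> sets (chan l1 l2)"
    by (simp_all, (rule pred_pair_set_borel, measurable)+)
  have "space (chan l1 l2) = {(x, y). 0 \<le> x \<and> 0 \<le> y} \<union> {(x, y). x \<le> 0 \<or> y \<le> 0}"
    by (auto simp: chan_def space_pair_measure)
  then have "emeasure (chan l1 l2) (space (chan l1 l2))
      \<le> emeasure (chan l1 l2) {(x, y). 0 \<le> x \<and> 0 \<le> y} + emeasure (chan l1 l2) {(x, y). x \<le> 0 \<or> y \<le> 0}"
    using emeasure_subadditive[OF S] by simp
  also have "\<dots> \<le> ennreal (exp (- 0 / l1) * exp (- 0 / l2))"
    using emeasure_chan_quadrant[OF l1 l2, of 0 0] by (simp add: emeasure_chan_nonpos_null)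
  finally show "emeasure (chan l1 l2) (space (chan l1 l2)) \<noteq> \<infinity>"
    by (auto simp: top_unique)
qed

lemma measure_le_of_emeasure_le: "emeasure M A \<le> ennreal b \<Longrightarrow> 0 \<le> b \<Longrightarrow> measure M A \<le> b"
  unfolding measure_def by (metis enn2real_ennreal enn2real_mono ennreal_less_top)

lemma exp_neg_div_mono: "(l2::real) \<le> l1 \<Longrightarrow> 0 < l2 \<Longrightarrow> 0 \<le> t \<Longrightarrow> exp (- t / l2) \<le> exp (- t / l1)"
  using divide_left_mono[of l2 l1 t] by simp

text \<open>Since \<open>l2 \<le> l1\<close>, both coordinates have tails at most \<open>exp (- t / l1)\<close> and densities
  at most \<open>1 / l2\<close>; this makes all bounds below symmetric in the two coordinates.\<close>

lemma measure_chan_strip: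
  assumes l12: "l2 \<le> l1" and l2: "0 < l2" and t0: "0 \<le> t0" and m: "0 \<le> m" and w: "0 \<le> w"
    and f [measurable]: "f \<in> borel_measurable borel" and fm: "\<And>t. m \<le> f t"
  shows measure_chan_strip_vertical:
      "measure (chan l1 l2) {(x, y). t0 \<le> x \<and> f x \<le> y \<and> y \<le> f x + w} \<le> exp (- (t0 + m) / l1) * w / l2"
      (is "?vertical")
    and measure_chan_strip_horizontal:
      "measure (chan l1 l2) {(x, y). t0 \<le> y \<and> f y \<le> x \<and> x \<le> f y + w} \<le> exp (- (t0 + m) / l1) * w / l2"
      (is "?horizontal")
proof -
  have l1: "0 < l1" using l12 l2 by simp
  have exp_sum: "exp (- (t0 + m) / l1) = exp (- t0 / l1) * exp (- m / l1)"
    by (simp add: diff_divide_distrib exp_diff exp_minus field_simps)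
  have "measure (chan l1 l2) {(x, y). t0 \<le> x \<and> f x \<le> y \<and> y \<le> f x + w}
      \<le> exp (- t0 / l1) * (exp (- m / l2) / l2 * w)"
    using emeasure_chan_strip[OF l1 l2 w f fm] w l2 by (intro measure_le_of_emeasure_le) auto
  also have "\<dots> \<le> exp (- t0 / l1) * (exp (- m / l1) / l2 * w)"
    using exp_neg_div_mono[OF l12 l2 m] w l2 by (intro mult_left_mono mult_right_mono divide_right_mono) auto
  also have "\<dots> = exp (- (t0 + m) / l1) * w / l2"
    unfolding exp_sum by simp
  finally show ?vertical .
  have S: "{(x, y). t0 \<le> y \<and> f y \<le> x \<and> x \<le> f y + w} \<in> sets (borel \<Otimes>\<^sub>M borel)"
    by (rule pred_pair_set_borel) measurable
  have "measure (chan l1 l2) {(x, y). t0 \<le> y \<and> f y \<le> x \<and> x \<le> f y + w}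
      = measure (chan l2 l1) {(y, x). t0 \<le> y \<and> f y \<le> x \<and> x \<le> f y + w}"
    unfolding measure_def emeasure_chan_swap[OF S] ..
  also have "\<dots> \<le> exp (- t0 / l2) * (exp (- m / l1) / l1 * w)"
    using emeasure_chan_strip[OF l2 l1 w f fm] w l1 by (intro measure_le_of_emeasure_le) auto
  also have "\<dots> \<le> exp (- t0 / l1) * (exp (- m / l1) / l2 * w)"
    using exp_neg_div_mono[OF l12 l2 t0] w l2 l12
    by (intro mult_mono mult_right_mono divide_left_mono) auto
  also have "\<dots> = exp (- (t0 + m) / l1) * w / l2"
    unfolding exp_sum by simp
  finally show ?horizontal .
qed

lemma measure_chan_quadrant:
  assumes l12: "l2 \<le> l1" and l2: "0 < l2" and y0: "0 \<le> y0"
  shows "measure (chan l1 l2) {(x, y). x0 \<le> x \<and> y0 \<le> y} \<le> exp (- (x0 + y0) / l1)"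
proof -
  have l1: "0 < l1" using l12 l2 by simp
  have "measure (chan l1 l2) {(x, y). x0 \<le> x \<and> y0 \<le> y} \<le> exp (- x0 / l1) * exp (- y0 / l2)"
    by (rule measure_le_of_emeasure_le[OF emeasure_chan_quadrant[OF l1 l2]]) simp
  also have "\<dots> \<le> exp (- x0 / l1) * exp (- y0 / l1)"
    using exp_neg_div_mono[OF l12 l2 y0] by simp
  also have "\<dots> = exp (- (x0 + y0) / l1)"
    by (simp add: diff_divide_distrib exp_diff exp_minus field_simps)
  finally show ?thesis .
qed

section \<open>The power fraction \<open>Afun\<close>\<close>

text \<open>\<open>Afun P a b\<close> is the positive root of the following quadratic in \<open>t\<close>; every estimate on
  \<open>Afun\<close> below comes from the sign of this quadratic at a suitable test point.\<close>

definition Afun_poly :: "real \<Rightarrow> real \<Rightarrow> real \<Rightarrow> real \<Rightarrow> real" where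
  "Afun_poly P a b t = P * a * b * t^2 + (a + b) * t - b"

lemma Afun_pos:
  assumes "0 < a" "0 < b" "0 < P"
  shows "0 < Afun P a b"
proof -
  have "0 \<le> sqrt ((a + b)^2 + 4 * a * b^2 * P)"
    using assms by simp
  then have "0 < sqrt ((a + b)^2 + 4 * a * b^2 * P) + a + b"
    using assms by linarith
  then show ?thesis
    using assms unfolding Afun_def by simp
qed

lemma Afun_poly_Afun:
  assumes a: "0 < a" and b: "0 < b" and P: "0 < P"
  shows "Afun_poly P a b (Afun P a b) = 0"
proof -
  define s where "s = sqrt ((a + b)^2 + 4 * a * b^2 * P)"
  define d where "d = s + a + b"
  have s2: "s^2 = (a + b)^2 + 4 * a * b^2 * P"
    unfolding s_def using a b P by simp
  have "0 \<le> s"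
    unfolding s_def using a b P by simp
  then have d: "0 < d"
    unfolding d_def using a b by linarith
  have "Afun_poly P a b (2 * b / d) * d^2 = 4 * P * a * b^3 + 2 * b * (a + b) * d - b * d^2"
    unfolding Afun_poly_def using d by (simp add: field_simps power2_eq_square power3_eq_cube)
  also have "\<dots> = b * (4 * a * b^2 * P + (a + b)^2 - s^2)"
    unfolding d_def by (simp add: algebra_simps power2_eq_square power3_eq_cube)
  finally have "Afun_poly P a b (2 * b / d) = 0"
    using s2 d by simp
  then show ?thesis
    by (simp add: Afun_def s_def d_def add.assoc)
qed

lemma Afun_poly_strict_mono:
  assumes "0 < a" "0 < b" "0 < P" "0 \<le> t1" "t1 < t2"
  shows "Afun_poly P a b t1 < Afun_poly P a b t2"
proof -
  have "Afun_poly P a b t2 - Afun_poly P a b t1 = (t2 - t1) * (P * a * b * (t1 + t2) + a + b)"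
    unfolding Afun_poly_def by (simp add: algebra_simps power2_eq_square)
  moreover have "0 < (t2 - t1) * (P * a * b * (t1 + t2) + a + b)"
    using assms by (intro mult_pos_pos add_pos_pos add_nonneg_pos) auto
  ultimately show ?thesis by linarith
qed

lemma Afun_le_of_Afun_poly_nonneg:
  assumes "0 < a" "0 < b" "0 < P" "0 \<le> t" "0 \<le> Afun_poly P a b t"
  shows "Afun P a b \<le> t"
  using Afun_poly_strict_mono[of a b P t "Afun P a b"] Afun_poly_Afun[of a b P] assms by force

lemma Afun_ge_of_Afun_poly_nonpos:
  assumes "0 < a" "0 < b" "0 < P" "0 \<le> t" "Afun_poly P a b t \<le> 0"
  shows "t \<le> Afun P a b"
  using Afun_poly_strict_mono[of a b P "Afun P a b" t] Afun_poly_Afun[of a b P] Afun_pos[of a b P] assms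
  by force

lemma Afun_less_one:
  assumes "0 < a" "0 < b" "0 < P"
  shows "Afun P a b < 1"
proof -
  have "Afun P a b \<le> b / (a + b)"
  proof (rule Afun_le_of_Afun_poly_nonneg[OF assms])
    have "(a + b) * (b / (a + b)) = b"
      using assms by simp
    then show "0 \<le> Afun_poly P a b (b / (a + b))"
      unfolding Afun_poly_def using assms by simp
  qed (use assms in simp)
  also have "\<dots> < 1"
    using assms by simp
  finally show ?thesis .
qed

lemma Afun_le_inverse_sqrt:
  assumes a: "0 < a" and b: "0 < b" and P: "0 < P"
  shows "Afun P a b \<le> 1 / sqrt (a * P)"
proof (rule Afun_le_of_Afun_poly_nonneg[OF a b P])
  have r: "0 < sqrt (a * P)" "sqrt (a * P)^2 = a * P"
    using a P by simp_all
  show "0 \<le> 1 / sqrt (a * P)"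
    using r by simp
  have "Afun_poly P a b (1 / sqrt (a * P)) = (a + b) / sqrt (a * P)"
    unfolding Afun_poly_def using r a P by (simp add: power_divide)
  then show "0 \<le> Afun_poly P a b (1 / sqrt (a * P))"
    using r a b by simp
qed

lemma Afun_ge:
  assumes a: "0 < a" and b: "0 < b" and P: "0 < P"
  shows "b / (a + b + b * sqrt (a * P)) \<le> Afun P a b"
proof (rule Afun_ge_of_Afun_poly_nonpos[OF a b P])
  define r where "r = sqrt (a * P)"
  define D where "D = a + b + b * r"
  have r0: "0 \<le> r" and r2: "r^2 = a * P"
    unfolding r_def using a P by simp_all
  have D: "0 < D"
    unfolding D_def using a b r0 by (simp add: add_pos_nonneg)
  show "0 \<le> b / (a + b + b * sqrt (a * P))"
    using D b unfolding D_def r_def by simp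
  have "Afun_poly P a b (b / D) = b * (P * a * b^2 + (a + b) * D - D^2) / D^2"
    unfolding Afun_poly_def using D by (simp add: field_simps power2_eq_square)
  also have "P * a * b^2 + (a + b) * D - D^2 = b * r * (b * r - D)"
    unfolding D_def using r2 by (simp add: algebra_simps power2_eq_square)
  finally have "Afun_poly P a b (b / D) = b * (b * r * (b * r - D)) / D^2" .
  moreover have "b * r - D \<le> 0"
    unfolding D_def using a b by simp
  then have "b * (b * r * (b * r - D)) \<le> 0"
    using b r0 by (simp add: mult_nonneg_nonpos)
  ultimately show "Afun_poly P a b (b / (a + b + b * sqrt (a * P))) \<le> 0"
    unfolding D_def r_def by (simp add: divide_nonpos_nonneg)
qed

lemma Afun_mono_weak:
  assumes a: "0 < a" and b: "0 < b" and P: "0 < P" and bb: "b \<le> b'"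
  shows "Afun P a b \<le> Afun P a b'"
proof (rule Afun_ge_of_Afun_poly_nonpos)
  let ?t = "Afun P a b"
  have root: "Afun_poly P a b ?t = 0" and t0: "0 < ?t"
    using Afun_poly_Afun[OF a b P] Afun_pos[OF a b P] .
  have "b * (P * a * ?t^2 + ?t - 1) = - a * ?t"
    using root unfolding Afun_poly_def by (simp add: algebra_simps)
  then have "b * (P * a * ?t^2 + ?t - 1) < 0"
    using a t0 by simp
  then have "P * a * ?t^2 + ?t - 1 < 0"
    using b by (simp add: mult_less_0_iff)
  moreover have "Afun_poly P a b' ?t = Afun_poly P a b ?t + (b' - b) * (P * a * ?t^2 + ?t - 1)"
    unfolding Afun_poly_def by (simp add: algebra_simps)
  ultimately show "Afun_poly P a b' ?t \<le> 0"
    using root bb by (simp add: mult_nonneg_nonpos)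
qed (use assms Afun_pos[OF a b P] in auto)

lemma Afun_antimono_strong:
  assumes a: "0 < a" and b: "0 < b" and P: "0 < P" and aa: "a \<le> a'"
  shows "Afun P a' b \<le> Afun P a b"
proof (rule Afun_le_of_Afun_poly_nonneg)
  let ?t = "Afun P a b"
  have "Afun_poly P a' b ?t = Afun_poly P a b ?t + (a' - a) * (P * b * ?t^2 + ?t)"
    unfolding Afun_poly_def by (simp add: algebra_simps)
  then show "0 \<le> Afun_poly P a' b ?t"
    using Afun_poly_Afun[OF a b P] Afun_pos[OF a b P] aa b P by simp
qed (use assms Afun_pos[OF a b P] in auto)

lemma Afun_times_strong_mono:
  assumes x: "0 < x" and y: "0 < y" and P: "0 < P" and xa: "x \<le> a"
  shows "Afun P x y * x \<le> Afun P a y * a"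
proof -
  let ?t = "Afun P x y"
  have a: "0 < a" using x xa by simp
  have "?t * x / a \<le> Afun P a y"
  proof (rule Afun_ge_of_Afun_poly_nonpos[OF a y P])
    show "0 \<le> ?t * x / a"
      using Afun_pos[OF x y P] x a by simp
    have "Afun_poly P a y (?t * x / a) = Afun_poly P x y ?t + (x / a - 1) * (P * x * y * ?t^2 + y * ?t)"
      using a unfolding Afun_poly_def by (simp add: field_simps power2_eq_square)
    moreover have "x / a - 1 \<le> 0"
      using xa a by simp
    moreover have "0 \<le> P * x * y * ?t^2 + y * ?t"
      using P x y Afun_pos[OF x y P] by simp
    ultimately show "Afun_poly P a y (?t * x / a) \<le> 0"
      using Afun_poly_Afun[OF x y P] by (simp add: mult_nonpos_nonneg)
  qed
  then show ?thesis
    using a by (simp add: field_simps)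
qed

lemma Afun_div_weak_antimono:
  assumes x: "0 < x" and y: "0 < y" and P: "0 < P" and yb: "y \<le> b"
  shows "Afun P x b * y \<le> Afun P x y * b"
proof -
  let ?t = "Afun P x y"
  define s where "s = b / y"
  have s1: "1 \<le> s" and b: "b = y * s"
    unfolding s_def using y yb by simp_all
  have "Afun P x b \<le> ?t * s"
  proof (rule Afun_le_of_Afun_poly_nonneg)
    have "Afun_poly P x b (?t * s)
        = s * (Afun_poly P x y ?t + P * x * y * ?t^2 * (s^2 - 1) + y * ?t * (s - 1))"
      unfolding Afun_poly_def b by (simp add: algebra_simps power2_eq_square)
    moreover have "0 \<le> P * x * y * ?t^2 * (s^2 - 1)"
      using P x y s1 by (intro mult_nonneg_nonneg) (auto simp: one_le_power)
    moreover have "0 \<le> y * ?t * (s - 1)"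
      using y Afun_pos[OF x y P] s1 by simp
    ultimately show "0 \<le> Afun_poly P x b (?t * s)"
      using Afun_poly_Afun[OF x y P] s1 by simp
  qed (use x y P s1 b Afun_pos[OF x y P] in auto)
  then show ?thesis
    unfolding s_def using y by (simp add: field_simps)
qed

section \<open>The quantizer\<close>

lemma qo_bounds:
  assumes D: "0 < \<Delta>" and h: "0 < h" and T: "0 \<le> T"
  shows qo_ge_step: "\<Delta> \<le> qo \<Delta> T h"
    and qo_less: "qo \<Delta> T h < h + \<Delta>"
    and qo_le_saturation: "qo \<Delta> T h \<le> T * \<Delta> + \<Delta>"
    and qo_ge: "h \<le> T * \<Delta> \<Longrightarrow> h \<le> qo \<Delta> T h"
    and qo_saturated: "T * \<Delta> < h \<Longrightarrow> qo \<Delta> T h = T * \<Delta> + \<Delta>"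
proof -
  have c1: "h / \<Delta> \<le> of_int \<lceil>h / \<Delta>\<rceil>" and c2: "of_int \<lceil>h / \<Delta>\<rceil> < h / \<Delta> + 1"
    using ceiling_correct[of "h / \<Delta>"] by linarith+
  have c3: "(1::real) \<le> of_int \<lceil>h / \<Delta>\<rceil>"
    using h D by simp
  have "h \<le> of_int \<lceil>h / \<Delta>\<rceil> * \<Delta>"
    using mult_right_mono[OF c1, of \<Delta>] D by simp
  moreover have "of_int \<lceil>h / \<Delta>\<rceil> * \<Delta> < h + \<Delta>" "\<Delta> \<le> of_int \<lceil>h / \<Delta>\<rceil> * \<Delta>"
    using c2 c3 D by (simp_all add: field_simps)
  ultimately show "\<Delta> \<le> qo \<Delta> T h" "qo \<Delta> T h < h + \<Delta>" "qo \<Delta> T h \<le> T * \<Delta> + \<Delta>"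
    "h \<le> T * \<Delta> \<Longrightarrow> h \<le> qo \<Delta> T h" "T * \<Delta> < h \<Longrightarrow> qo \<Delta> T h = T * \<Delta> + \<Delta>"
    unfolding qo_def using T D by (auto simp: algebra_simps)
qed

lemma qo_le_mult:
  assumes D: "0 < \<Delta>" and x: "0 < x" and y: "0 < y" and T: "0 \<le> T" and le: "qo \<Delta> T y \<le> qo \<Delta> T x"
  shows "qo \<Delta> T x \<le> qo \<Delta> T y * (1 + x / y)"
proof (cases "y \<le> T * \<Delta>")
  case True
  then have "x \<le> qo \<Delta> T y * (x / y)"
    using qo_ge[OF D y T] x y by (simp add: field_simps)
  then show ?thesis
    using qo_less[OF D x T] qo_ge_step[OF D y T] by (simp add: algebra_simps)
next
  case False
  then have "qo \<Delta> T x = qo \<Delta> T y"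
    using le qo_saturated[OF D y T] qo_le_saturation[OF D x T] by simp
  moreover have "qo \<Delta> T y * 1 \<le> qo \<Delta> T y * (1 + x / y)"
    using qo_ge_step[OF D y T] D x y by (intro mult_left_mono) auto
  ultimately show ?thesis by simp
qed

section \<open>SINRs and rates\<close>

text \<open>With power fraction \<open>\<alpha>\<close> for the strong user (gain \<open>x\<close>) the two SINRs are \<open>P x \<alpha>\<close> and
  \<open>P y (1 - \<alpha>) / (P y \<alpha> + 1)\<close>; \<open>Afun P x y\<close> equalises them, and \<open>P x Afun P x y\<close> is the common SINR.\<close>

lemma Afun_sinr_eq:
  assumes x: "0 < x" and y: "0 < y" and P: "0 < P"
  shows "P * y * (1 - Afun P x y * (1 + P * x * Afun P x y)) = P * x * Afun P x y"
proof -
  have "P * y * (1 - Afun P x y * (1 + P * x * Afun P x y)) - P * x * Afun P x y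
      = - P * Afun_poly P x y (Afun P x y)"
    unfolding Afun_poly_def by (simp add: algebra_simps power2_eq_square)
  then show ?thesis
    using Afun_poly_Afun[OF x y P] by simp
qed

lemma Afun_sinr_identity:
  assumes x: "0 < x" and y: "0 < y" and P: "0 < P" and u: "u = P * x * Afun P x y"
  shows "u * (u + 1) * y + u * x = P * x * y"
proof -
  have "u * (u + 1) * y + u * x - P * x * y = P * x * Afun_poly P x y (Afun P x y)"
    unfolding u Afun_poly_def by (simp add: algebra_simps power2_eq_square)
  then show ?thesis
    using Afun_poly_Afun[OF x y P] by simp
qed

lemma Afun_sinr_le:
  assumes x: "0 < x" and y: "0 < y" and P: "0 < P"
  shows "P * x * Afun P x y \<le> P * y"
proof -
  let ?u = "P * x * Afun P x y"
  have "0 \<le> ?u * (?u + 1) * y"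
    using Afun_pos[OF x y P] x y P by simp
  then have "x * ?u \<le> x * (P * y)"
    using Afun_sinr_identity[OF x y P refl] by (simp add: algebra_simps)
  then show ?thesis
    using x by simp
qed

lemma log2_one_plus_less_iff: "-1 < s \<Longrightarrow> log 2 (1 + s) < r \<longleftrightarrow> s < 2 powr r - 1"
  by (subst log_less_iff) auto

lemma rmax_commute: "rmax P x y = rmax P y x"
  unfolding rmax_def by auto

lemma sinr_ge_of_rmax:
  assumes P: "0 < P" and x: "0 < x" and y: "0 < y" and yx: "y \<le> x"
    and r: "\<not> rmax P x y < rth" and g: "\<gamma> = 2 powr rth - 1"
  shows "\<gamma> \<le> P * x * Afun P x y"
proof -
  have "0 < P * x * Afun P x y"
    using Afun_pos[OF x y P] P x by simp
  then have "-1 < P * x * Afun P x y"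
    by linarith
  then show ?thesis
    using r yx g by (simp add: rmax_def log2_one_plus_less_iff)
qed

lemma gains_ge_of_rmax:
  assumes P: "0 < P" and x: "0 < x" and y: "0 < y"
    and r: "\<not> rmax P x y < rth" and g: "\<gamma> = 2 powr rth - 1"
  shows "\<gamma> \<le> P * x \<and> \<gamma> \<le> P * y"
proof (cases "y \<le> x")
  case True
  have "\<gamma> \<le> P * y"
    using sinr_ge_of_rmax[OF P x y True r g] Afun_sinr_le[OF x y P] by simp
  moreover have "P * y \<le> P * x"
    using True P by simp
  ultimately show ?thesis
    by linarith
next
  case False
  have "\<gamma> \<le> P * x"
    using sinr_ge_of_rmax[OF P y x _ _ g] Afun_sinr_le[OF y x P] r False
    by (simp add: rmax_commute)
  moreover have "P * x \<le> P * y"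
    using False P by simp
  ultimately show ?thesis
    by linarith
qed

lemma rate_fail_cases:
  assumes P: "0 < P" and x: "0 < x" and y: "0 < y" and b: "0 \<le> b" "b < 1"
    and g: "\<gamma> = 2 powr rth - 1"
    and fail: "min (log 2 (1 + P * b * x)) (log 2 (1 + P * y * (1 - b) / (P * y * b + 1))) < rth"
  shows "P * b * x < \<gamma> \<or> P * y * (1 - b * (1 + \<gamma>)) < \<gamma>"
proof -
  have "0 \<le> P * y * b"
    using P y b by simp
  then have d: "0 < P * y * b + 1"
    by linarith
  have "0 \<le> P * b * x" "0 \<le> P * y * (1 - b) / (P * y * b + 1)"
    using P x y b d by simp_all
  then have "-1 < P * b * x" "-1 < P * y * (1 - b) / (P * y * b + 1)"
    by linarith+
  then have "P * b * x < \<gamma> \<or> P * y * (1 - b) / (P * y * b + 1) < \<gamma>"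
    using fail g by (auto simp: min_def log2_one_plus_less_iff split: if_splits)
  then show ?thesis
    using d by (auto simp: divide_less_eq algebra_simps)
qed

section \<open>Pairs of gains in the loss event\<close>

lemma Afun_quantized_bounds:
  assumes P: "0 < P" and x: "0 < x" and y: "0 < y" and xa: "x \<le> as" and yb: "y \<le> aw"
  shows "Afun P x y * x \<le> Afun P as aw * as" and "Afun P as aw * y \<le> Afun P x y * aw"
proof -
  have as: "0 < as" and aw: "0 < aw"
    using x xa y yb by simp_all
  have "Afun P x y * x \<le> Afun P as y * as"
    by (rule Afun_times_strong_mono[OF x y P xa])
  also have "\<dots> \<le> Afun P as aw * as"
    using Afun_mono_weak[OF as y P yb] as by simp
  finally show "Afun P x y * x \<le> Afun P as aw * as" .
  have "Afun P as aw * y \<le> Afun P x aw * y"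
    using Afun_antimono_strong[OF x aw P xa] y by simp
  also have "\<dots> \<le> Afun P x y * aw"
    by (rule Afun_div_weak_antimono[OF x y P yb])
  finally show "Afun P as aw * y \<le> Afun P x y * aw" .
qed

text \<open>Quantization error at most \<open>\<Delta>\<close> cannot turn a full-CSI success into a failure unless the
  common SINR \<open>u\<close> is within relative distance \<open>O(\<Delta> / x)\<close> of the threshold \<open>\<gamma>\<close>.\<close>

lemma sinr_close_of_quantized_fail:
  assumes P: "0 < P" and g: "0 < \<gamma>" and D: "0 < \<Delta>" and x: "0 < x" and y: "0 < y"
    and x_le: "x \<le> as" and as_less: "as < x + \<Delta>" and y_le: "y \<le> aw" and aw_less: "aw < y + \<Delta>"
    and u: "u = P * x * Afun P x y" and gu: "\<gamma> \<le> u"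
    and fail: "P * Afun P as aw * x < \<gamma> \<or> P * y * (1 - Afun P as aw * (1 + \<gamma>)) < \<gamma>"
  shows "(u - \<gamma>) * x < (1 + \<gamma>) * u * \<Delta>"
proof -
  let ?a = "Afun P x y" and ?b = "Afun P as aw"
  note bounds = Afun_quantized_bounds[OF P x y x_le y_le]
  have a0: "0 < ?a"
    by (rule Afun_pos[OF x y P])
  from fail show ?thesis
  proof
    assume f: "P * ?b * x < \<gamma>"
    have "u * x \<le> (P * ?b * x) * as"
      using bounds(1) P x u by (simp add: algebra_simps)
    also have "\<dots> < \<gamma> * as"
      using f x x_le by simp
    also have "\<dots> < \<gamma> * (x + \<Delta>)"
      using as_less g by simp
    finally have "(u - \<gamma>) * x < \<gamma> * \<Delta>"
      by (simp add: algebra_simps)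
    also have "\<gamma> * \<Delta> \<le> (1 + \<gamma>) * u * \<Delta>"
      using gu g D by (intro mult_right_mono) (auto simp: algebra_simps add_increasing2)
    finally show ?thesis .
  next
    assume f: "P * y * (1 - ?b * (1 + \<gamma>)) < \<gamma>"
    have "P * ?b * y * (1 + \<gamma>) \<le> P * ?a * aw * (1 + \<gamma>)"
      using bounds(2) P g by (simp add: mult_left_mono mult_right_mono mult.assoc)
    also have "\<dots> < P * ?a * (y + \<Delta>) * (1 + \<gamma>)"
      using aw_less P a0 g by simp
    finally have "P * y - P * ?a * (y + \<Delta>) * (1 + \<gamma>) < \<gamma>"
      using f by (simp add: algebra_simps)
    then have "(u - \<gamma>) * (1 + P * ?a * y) < P * ?a * \<Delta> * (1 + \<gamma>)"
      using Afun_sinr_eq[OF x y P] u by (simp add: algebra_simps)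
    moreover have "u - \<gamma> \<le> (u - \<gamma>) * (1 + P * ?a * y)"
      using gu P a0 y by (simp add: algebra_simps)
    ultimately have "u - \<gamma> < P * ?a * \<Delta> * (1 + \<gamma>)"
      by linarith
    then have "(u - \<gamma>) * x < P * ?a * \<Delta> * (1 + \<gamma>) * x"
      using x by simp
    then show ?thesis
      using u by (simp add: algebra_simps)
  qed
qed

definition outage_curve :: "real \<Rightarrow> real \<Rightarrow> real \<Rightarrow> real" where
  "outage_curve P \<gamma> x = \<gamma> * x / (P * x - \<gamma> * (\<gamma> + 1))"

text \<open>By \<open>Afun_sinr_identity\<close>, the common SINR \<open>P x Afun P x y\<close> equals \<open>\<gamma>\<close> exactly when
  \<open>y = outage_curve P \<gamma> x\<close>: this curve bounds the full-CSI outage region.\<close>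

definition near_outage_curve :: "real \<Rightarrow> real \<Rightarrow> real \<Rightarrow> real \<Rightarrow> real \<Rightarrow> bool" where
  "near_outage_curve P \<gamma> \<Delta> x y \<longleftrightarrow> \<gamma> * (\<gamma> + 1) < P * x \<and> outage_curve P \<gamma> x \<le> y
     \<and> y \<le> outage_curve P \<gamma> x + 6 * (1 + \<gamma>) * (\<gamma> + 2) * \<Delta>"

lemma outage_curve_le:
  assumes P: "0 < P" and g: "0 < \<gamma>" and y: "0 < y" and yx: "y \<le> x"
    and gu: "\<gamma> \<le> P * x * Afun P x y"
  shows "\<gamma> \<le> P * x - \<gamma> * (\<gamma> + 1)" and "outage_curve P \<gamma> x \<le> y"
proof -
  let ?u = "P * x * Afun P x y" and ?c = "\<gamma> * (\<gamma> + 1)"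
  have x: "0 < x"
    using y yx by simp
  have "?c * y \<le> ?u * (?u + 1) * y"
    using g gu y by (intro mult_right_mono mult_mono) auto
  moreover have "\<gamma> * x \<le> ?u * x"
    using gu x by (intro mult_right_mono) auto
  ultimately have low: "\<gamma> * x \<le> y * (P * x - ?c)"
    using Afun_sinr_identity[OF x y P refl] by (simp add: algebra_simps)
  moreover have "0 < \<gamma> * x"
    using g x by simp
  ultimately have "0 < y * (P * x - ?c)"
    by linarith
  then have pos: "0 < P * x - ?c"
    using y by (simp add: zero_less_mult_iff)
  have "y * (P * x - ?c) \<le> x * (P * x - ?c)"
    using yx pos by (simp add: mult_right_mono)
  then have "x * \<gamma> \<le> x * (P * x - ?c)"
    using low by (simp add: mult.commute)
  then show "\<gamma> \<le> P * x - ?c"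
    using x by simp
  show "outage_curve P \<gamma> x \<le> y"
    unfolding outage_curve_def using low pos by (simp add: divide_le_eq mult.commute)
qed

lemma gain_product_le_of_sinr_le:
  assumes P: "0 < P" and g: "0 < \<gamma>" and x: "0 < x" and y: "0 < y" and yx: "y \<le> x"
    and u: "u = P * x * Afun P x y" and uv: "u \<le> \<gamma> * (1 + e)" and e: "0 \<le> e" "e \<le> 1"
  shows "P * x * y \<le> \<gamma> * (\<gamma> + 1) * y + \<gamma> * x + 3 * e * (\<gamma> * (\<gamma> + 1) + \<gamma>) * x"
proof -
  let ?v = "\<gamma> * (1 + e)" and ?c = "\<gamma> * (\<gamma> + 1)"
  have u0: "0 < u"
    using u Afun_pos[OF x y P] P x by simp
  have "P * x * y = u * (u + 1) * y + u * x"
    using Afun_sinr_identity[OF x y P u] by simp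
  also have "\<dots> \<le> ?v * (?v + 1) * y + ?v * x"
    using uv u0 x y by (intro add_mono mult_right_mono mult_mono) auto
  also have "\<dots> \<le> (1 + e)^2 * (?c * y + \<gamma> * x)"
  proof -
    have "?v * (?v + 1) \<le> (1 + e)^2 * ?c"
      using g e by (simp add: power2_eq_square algebra_simps mult_left_mono)
    moreover have "?v \<le> (1 + e)^2 * \<gamma>"
      using g e by (simp add: power2_eq_square algebra_simps)
    ultimately show ?thesis
      using x y by (simp add: distrib_left mult.assoc add_mono mult_right_mono)
  qed
  also have "\<dots> \<le> (1 + 3 * e) * (?c * y + \<gamma> * x)"
    using g x y e mult_left_le[of e e] by (intro mult_right_mono) (auto simp: power2_eq_square algebra_simps)
  also have "\<dots> \<le> ?c * y + \<gamma> * x + 3 * e * (?c + \<gamma>) * x"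
    using mult_left_mono[OF yx, of "3 * e * ?c"] g e by (simp add: algebra_simps)
  finally show ?thesis .
qed

lemma near_outage_curve_of_sinr_close:
  assumes P: "0 < P" and g: "0 < \<gamma>" and D: "0 < \<Delta>" and y: "0 < y" and yx: "y \<le> x"
    and u: "u = P * x * Afun P x y" and gu: "\<gamma> \<le> u"
    and close: "(u - \<gamma>) * x < (1 + \<gamma>) * u * \<Delta>" and big: "2 * (1 + \<gamma>) * \<Delta> \<le> x"
  shows "near_outage_curve P \<gamma> \<Delta> x y"
proof -
  define t where "t = (1 + \<gamma>) * \<Delta>"
  define e where "e = 2 * t / x"
  let ?c = "\<gamma> * (\<gamma> + 1)"
  have x: "0 < x" and t: "0 < t" and xt: "2 * t \<le> x"
    using y yx g D big unfolding t_def by (simp_all add: algebra_simps add_pos_pos)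
  have e: "0 \<le> e" "e \<le> 1" and ex: "e * x = 2 * t"
    unfolding e_def using x t xt by simp_all
  note lower = outage_curve_le[OF P g y yx gu[unfolded u]]
  have "u * (x - t) < \<gamma> * x"
    using close unfolding t_def by (simp add: algebra_simps)
  also have "\<gamma> * x \<le> \<gamma> * (1 + e) * (x - t)"
  proof -
    have "x * x \<le> (x + 2 * t) * (x - t)"
      using t xt by (simp add: algebra_simps mult_left_mono)
    then have "x \<le> (1 + e) * (x - t)"
      unfolding e_def using x by (simp add: field_simps)
    then show ?thesis
      using g by (simp add: mult.assoc)
  qed
  finally have "u \<le> \<gamma> * (1 + e)"
    using xt t by (simp add: mult_less_cancel_right)
  from gain_product_le_of_sinr_le[OF P g x y yx u this e]
  have "P * x * y \<le> ?c * y + \<gamma> * x + 3 * (e * x) * (?c + \<gamma>)"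
    by (simp add: algebra_simps)
  then have "y * (P * x - ?c) \<le> \<gamma> * x + 6 * t * (?c + \<gamma>)"
    unfolding ex by (simp add: algebra_simps)
  moreover have pos: "0 < P * x - ?c"
    using lower(1) g by linarith
  ultimately have "y \<le> (\<gamma> * x + 6 * t * (?c + \<gamma>)) / (P * x - ?c)"
    by (simp add: pos_le_divide_eq mult.commute)
  also have "\<dots> = outage_curve P \<gamma> x + 6 * t * (?c + \<gamma>) / (P * x - ?c)"
    unfolding outage_curve_def by (rule add_divide_distrib)
  also have "6 * t * (?c + \<gamma>) / (P * x - ?c) \<le> 6 * t * (?c + \<gamma>) / \<gamma>"
    using lower(1) g t by (intro divide_left_mono) auto
  also have "\<dots> = 6 * (1 + \<gamma>) * (\<gamma> + 2) * \<Delta>"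
    unfolding t_def using g by (simp add: field_simps)
  finally show ?thesis
    unfolding near_outage_curve_def using lower g by simp
qed

lemma snr_less_of_strong_fail:
  assumes P: "0 < P" and g: "0 < \<gamma>" and D: "0 < \<Delta>" and x: "0 < x" and y: "0 < y"
    and as: "0 < as" and aw: "0 < aw" and as_le: "as \<le> aw * (1 + x / y)" and as_less: "as < x + \<Delta>"
    and fail: "P * Afun P as aw * x < \<gamma>"
  shows "P * x < \<gamma> * (2 + sqrt (\<Delta> * P)) + \<gamma> * (x / y) + \<gamma> * sqrt (x * P)"
proof -
  define Dn where "Dn = as + aw + aw * sqrt (as * P)"
  have Dn: "0 < Dn"
    unfolding Dn_def using as aw P by (simp add: add_pos_nonneg)
  have "P * x * (aw / Dn) \<le> P * x * Afun P as aw"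
    unfolding Dn_def using Afun_ge[OF as aw P] P x by (intro mult_left_mono) auto
  then have "P * x * aw / Dn < \<gamma>"
    using fail by (simp add: algebra_simps)
  then have "aw * (P * x) < \<gamma> * Dn"
    using Dn by (simp add: divide_less_eq algebra_simps)
  also have "\<gamma> * Dn \<le> \<gamma> * (aw * (2 + x / y + sqrt (as * P)))"
    unfolding Dn_def using as_le g by (intro mult_left_mono) (auto simp: algebra_simps)
  also have "\<dots> = aw * (\<gamma> * (2 + x / y + sqrt (as * P)))"
    by (simp only: mult.left_commute)
  finally have "P * x < \<gamma> * (2 + x / y + sqrt (as * P))"
    using aw by simp
  moreover have "sqrt (as * P) \<le> sqrt (x * P) + sqrt (\<Delta> * P)"
  proof -
    have "as * P \<le> (x + \<Delta>) * P"
      using as_less P by (intro mult_right_mono) auto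
    then have "sqrt (as * P) \<le> sqrt (x * P + \<Delta> * P)"
      by (simp add: algebra_simps)
    also have "\<dots> \<le> sqrt (x * P) + sqrt (\<Delta> * P)"
      using x D P by (intro sqrt_add_le_add_sqrt) auto
    finally show ?thesis .
  qed
  then have "\<gamma> * (2 + x / y + sqrt (as * P)) \<le> \<gamma> * (2 + x / y + (sqrt (x * P) + sqrt (\<Delta> * P)))"
    using g by (intro mult_left_mono) auto
  ultimately show ?thesis
    by (simp add: algebra_simps)
qed

lemma snr_small_of_strong_fail:
  assumes P: "0 < P" and g: "0 < \<gamma>" and x: "0 < x" and y: "0 < y"
    and sum: "P * x < \<gamma> * (2 + sqrt (\<Delta> * P)) + \<gamma> * (x / y) + \<gamma> * sqrt (x * P)"
  shows "P * x \<le> 3 * \<gamma> * (2 + sqrt (\<Delta> * P)) \<or> P * y \<le> 3 * \<gamma> \<or> P * x \<le> 9 * \<gamma>^2"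
proof -
  consider "P * x \<le> 3 * \<gamma> * (2 + sqrt (\<Delta> * P))" | "P * x \<le> 3 * (\<gamma> * (x / y))"
    | "P * x \<le> 3 * (\<gamma> * sqrt (x * P))"
    using sum by linarith
  then show ?thesis
  proof cases
    case 2
    then have "x * (P * y) \<le> x * (3 * \<gamma>)"
      using y by (simp add: le_divide_eq algebra_simps)
    then show ?thesis
      using x by simp
  next
    case 3
    have sp: "0 < sqrt (x * P)"
      using x P by simp
    have "sqrt (x * P) * sqrt (x * P) \<le> (3 * \<gamma>) * sqrt (x * P)"
      using 3 x P by (simp add: algebra_simps)
    then have le: "sqrt (x * P) \<le> 3 * \<gamma>"
      by (rule mult_right_le_imp_le[OF _ sp])
    have "P * x = sqrt (x * P) * sqrt (x * P)"
      using x P by (simp add: mult.commute)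
    also have "\<dots> \<le> (3 * \<gamma>) * (3 * \<gamma>)"
      using le sp g by (intro mult_mono) auto
    finally show ?thesis
      by (simp add: power2_eq_square)
  qed simp
qed

lemma snr_small_of_weak_fail:
  assumes P: "0 < P" and g: "0 < \<gamma>" and y: "0 < y" and as: "0 < as" and aw: "0 < aw"
    and fail: "P * y * (1 - Afun P as aw * (1 + \<gamma>)) < \<gamma>"
  shows "P * y < 2 * \<gamma> \<or> as * P < 4 * (1 + \<gamma>)^2"
proof (cases "Afun P as aw * (1 + \<gamma>) \<le> 1 / 2")
  case True
  then have "P * y * (1 / 2) \<le> P * y * (1 - Afun P as aw * (1 + \<gamma>))"
    using P y by (intro mult_left_mono) auto
  then show ?thesis
    using fail by simp
next
  case False
  have sa: "0 < sqrt (as * P)"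
    using as P by simp
  have "Afun P as aw * (1 + \<gamma>) \<le> (1 / sqrt (as * P)) * (1 + \<gamma>)"
    using Afun_le_inverse_sqrt[OF as aw P] g by (intro mult_right_mono) auto
  then have "1 / 2 < (1 / sqrt (as * P)) * (1 + \<gamma>)"
    using False by linarith
  then have "sqrt (as * P) < 2 * (1 + \<gamma>)"
    using sa by (simp add: field_simps)
  then have "sqrt (as * P)^2 < (2 * (1 + \<gamma>))^2"
    using sa by (intro power_strict_mono) auto
  also have "(2 * (1 + \<gamma>))^2 = 4 * (1 + \<gamma>)^2"
    by (simp add: power2_eq_square algebra_simps)
  finally show ?thesis
    using as P by simp
qed

definition snr_const :: "real \<Rightarrow> real" where
  "snr_const \<gamma> = 9 * \<gamma> + 9 * \<gamma>^2 + 4 * (1 + \<gamma>)^2"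

definition snr_bound :: "real \<Rightarrow> real \<Rightarrow> real \<Rightarrow> real" where
  "snr_bound P \<Delta> \<gamma> = snr_const \<gamma> + 3 * \<gamma> * sqrt (\<Delta> * P)"

text \<open>Where quantized and full-CSI outage can disagree: beyond the saturation level \<open>M\<close> of the
  quantizer, near the diagonal (where the quantizer may swap the roles of the users), near the axes,
  and near the outage curve.\<close>

definition loss_zone :: "real \<Rightarrow> real \<Rightarrow> real \<Rightarrow> real \<Rightarrow> real \<Rightarrow> real \<Rightarrow> bool" where
  "loss_zone P \<gamma> \<Delta> M x y \<longleftrightarrow> M < x \<or> M < y \<or> \<bar>x - y\<bar> < \<Delta>
     \<or> x < 2 * (1 + \<gamma>) * \<Delta> \<or> y < 2 * (1 + \<gamma>) * \<Delta>
     \<or> near_outage_curve P \<gamma> \<Delta> x y \<or> near_outage_curve P \<gamma> \<Delta> y x"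

lemma loss_zone_commute: "loss_zone P \<gamma> \<Delta> M x y \<longleftrightarrow> loss_zone P \<gamma> \<Delta> M y x"
  unfolding loss_zone_def by (auto simp: abs_minus_commute)

lemma quantized_fail_cases:
  assumes P: "0 < P" and D: "0 < \<Delta>" and T: "0 \<le> T" and x: "0 < x" and y: "0 < y"
    and g: "\<gamma> = 2 powr rth - 1"
    and fail: "min (log 2 (1 + P * Afun P (qo \<Delta> T x) (qo \<Delta> T y) * x))
      (log 2 (1 + P * y * (1 - Afun P (qo \<Delta> T x) (qo \<Delta> T y))
        / (P * y * Afun P (qo \<Delta> T x) (qo \<Delta> T y) + 1))) < rth"
  shows "P * Afun P (qo \<Delta> T x) (qo \<Delta> T y) * x < \<gamma>
    \<or> P * y * (1 - Afun P (qo \<Delta> T x) (qo \<Delta> T y) * (1 + \<gamma>)) < \<gamma>"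
proof -
  have "0 < qo \<Delta> T x" "0 < qo \<Delta> T y"
    using qo_ge_step[OF D x T] qo_ge_step[OF D y T] D by simp_all
  then show ?thesis
    using rate_fail_cases[OF P x y _ _ g fail] Afun_pos[OF _ _ P] Afun_less_one[OF _ _ P]
    by (simp add: less_imp_le)
qed

lemma snr_bound_of_quantized_fail:
  assumes P: "0 < P" and g: "0 < \<gamma>" and D: "0 < \<Delta>" and T: "0 \<le> T" and x: "0 < x" and y: "0 < y"
    and le: "qo \<Delta> T y \<le> qo \<Delta> T x"
    and fail: "P * Afun P (qo \<Delta> T x) (qo \<Delta> T y) * x < \<gamma>
      \<or> P * y * (1 - Afun P (qo \<Delta> T x) (qo \<Delta> T y) * (1 + \<gamma>)) < \<gamma>"
  shows "P * x \<le> snr_bound P \<Delta> \<gamma> \<or> P * y \<le> snr_bound P \<Delta> \<gamma> \<or> P * (T * \<Delta> + \<Delta>) < 4 * (1 + \<gamma>)^2"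
proof -
  define as aw where "as = qo \<Delta> T x" and "aw = qo \<Delta> T y"
  have as: "0 < as" and aw: "0 < aw"
    unfolding as_def aw_def using qo_ge_step[OF D x T] qo_ge_step[OF D y T] D by simp_all
  have sq: "0 \<le> sqrt (\<Delta> * P)"
    using D P by simp
  then have R: "3 * \<gamma> * (2 + sqrt (\<Delta> * P)) \<le> snr_bound P \<Delta> \<gamma>" "2 * \<gamma> \<le> snr_bound P \<Delta> \<gamma>"
    "3 * \<gamma> \<le> snr_bound P \<Delta> \<gamma>" "9 * \<gamma>^2 \<le> snr_bound P \<Delta> \<gamma>" "4 * (1 + \<gamma>)^2 \<le> snr_bound P \<Delta> \<gamma>"
    unfolding snr_bound_def snr_const_def using g by (simp_all add: algebra_simps)
  from fail[folded as_def aw_def] show ?thesis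
  proof
    assume "P * Afun P as aw * x < \<gamma>"
    from snr_small_of_strong_fail[OF P g x y snr_less_of_strong_fail[OF P g D x y as aw _ _ this]]
    show ?thesis
      using qo_le_mult[OF D x y T le] qo_less[OF D x T] R unfolding as_def aw_def by linarith
  next
    assume "P * y * (1 - Afun P as aw * (1 + \<gamma>)) < \<gamma>"
    from snr_small_of_weak_fail[OF P g y as aw this]
    show ?thesis
    proof
      assume "as * P < 4 * (1 + \<gamma>)^2"
      moreover have "P * x \<le> as * P \<or> as = T * \<Delta> + \<Delta>"
        using qo_ge[OF D x T] qo_saturated[OF D x T] P unfolding as_def by force
      ultimately show ?thesis
        using R by (auto simp: mult.commute)
    qed (use R in linarith)
  qed
qed

lemma loss_zone_of_quantized_fail:
  assumes P: "0 < P" and g: "0 < \<gamma>" and D: "0 < \<Delta>" and T: "0 \<le> T" and x: "0 < x" and y: "0 < y"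
    and le: "qo \<Delta> T y \<le> qo \<Delta> T x"
    and fail: "P * Afun P (qo \<Delta> T x) (qo \<Delta> T y) * x < \<gamma>
      \<or> P * y * (1 - Afun P (qo \<Delta> T x) (qo \<Delta> T y) * (1 + \<gamma>)) < \<gamma>"
    and success: "\<gamma> \<le> P * x * Afun P x y \<or> x < y"
  shows "loss_zone P \<gamma> \<Delta> (T * \<Delta>) x y"
proof (cases "T * \<Delta> < x \<or> T * \<Delta> < y")
  case False
  then have xa: "x \<le> qo \<Delta> T x" and yb: "y \<le> qo \<Delta> T y"
    using qo_ge[OF D x T] qo_ge[OF D y T] by auto
  note as_less = qo_less[OF D x T] and aw_less = qo_less[OF D y T]
  show ?thesis
  proof (cases "y \<le> x")
    case False
    then have "\<bar>x - y\<bar> < \<Delta>"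
      using yb le as_less by simp
    then show ?thesis
      unfolding loss_zone_def by simp
  next
    case yx: True
    define u where "u = P * x * Afun P x y"
    have gu: "\<gamma> \<le> u"
      using success yx unfolding u_def by simp
    have "(u - \<gamma>) * x < (1 + \<gamma>) * u * \<Delta>"
      by (rule sinr_close_of_quantized_fail[OF P g D x y xa as_less yb aw_less u_def gu fail])
    then have "x < 2 * (1 + \<gamma>) * \<Delta> \<or> near_outage_curve P \<gamma> \<Delta> x y"
      using near_outage_curve_of_sinr_close[OF P g D y yx u_def gu] by linarith
    then show ?thesis
      unfolding loss_zone_def by auto
  qed
qed (auto simp: loss_zone_def)

lemma rq_less_cases:
  assumes D: "0 < \<Delta>" and T: "0 \<le> T" and h1: "0 < h1" and h2: "0 < h2"
    and q: "rq P \<Delta> T h1 h2 < rth"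
  obtains x y where "(x, y) = (h1, h2) \<or> (x, y) = (h2, h1)" and "qo \<Delta> T y \<le> qo \<Delta> T x"
    and "min (log 2 (1 + P * Afun P (qo \<Delta> T x) (qo \<Delta> T y) * x))
      (log 2 (1 + P * y * (1 - Afun P (qo \<Delta> T x) (qo \<Delta> T y))
        / (P * y * Afun P (qo \<Delta> T x) (qo \<Delta> T y) + 1))) < rth"
proof -
  have "0 < qo \<Delta> T h1" "0 < qo \<Delta> T h2"
    using qo_ge_step[OF D h1 T] qo_ge_step[OF D h2 T] D by simp_all
  then show ?thesis
    using that[of h1 h2] that[of h2 h1] q
    by (cases "qo \<Delta> T h2 \<le> qo \<Delta> T h1") (auto simp: rq_def alpha_q_def Let_def)
qed

lemma loss_event:
  assumes P: "0 < P" and rth: "0 < rth" and D: "0 < \<Delta>" and T: "0 \<le> T" and h1: "0 < h1" and h2: "0 < h2"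
    and g: "\<gamma> = 2 powr rth - 1"
    and q: "rq P \<Delta> T h1 h2 < rth" and r: "\<not> rmax P h1 h2 < rth"
  shows "\<gamma> / P \<le> h1 \<and> \<gamma> / P \<le> h2
    \<and> (P * h1 \<le> snr_bound P \<Delta> \<gamma> \<or> P * h2 \<le> snr_bound P \<Delta> \<gamma> \<or> P * (T * \<Delta> + \<Delta>) < 4 * (1 + \<gamma>)^2)
    \<and> loss_zone P \<gamma> \<Delta> (T * \<Delta>) h1 h2"
proof -
  have g0: "0 < \<gamma>"
    using g rth by simp
  obtain x y where xy: "(x, y) = (h1, h2) \<or> (x, y) = (h2, h1)" and le: "qo \<Delta> T y \<le> qo \<Delta> T x"
    and fail_rate: "min (log 2 (1 + P * Afun P (qo \<Delta> T x) (qo \<Delta> T y) * x))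
      (log 2 (1 + P * y * (1 - Afun P (qo \<Delta> T x) (qo \<Delta> T y))
        / (P * y * Afun P (qo \<Delta> T x) (qo \<Delta> T y) + 1))) < rth"
    using rq_less_cases[OF D T h1 h2 q] by blast
  have x: "0 < x" and y: "0 < y" and r': "\<not> rmax P x y < rth"
    using xy h1 h2 r by (auto simp: rmax_commute)
  note fail = quantized_fail_cases[OF P D T x y g fail_rate]
  have "\<gamma> \<le> P * x * Afun P x y \<or> x < y"
    using sinr_ge_of_rmax[OF P x y _ r' g] by linarith
  note zone = loss_zone_of_quantized_fail[OF P g0 D T x y le fail this]
  note snr = snr_bound_of_quantized_fail[OF P g0 D T x y le fail]
  have "\<gamma> / P \<le> h1 \<and> \<gamma> / P \<le> h2"
    using gains_ge_of_rmax[OF P h1 h2 r g] P by (simp add: divide_le_eq mult.commute)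
  then show ?thesis
    using xy zone snr by (auto simp: loss_zone_commute)
qed

section \<open>Probability of the loss event\<close>

lemma rmax_less_set_measurable: "{(h1, h2). rmax P h1 h2 < rth} \<in> sets (borel \<Otimes>\<^sub>M borel)"
  by (rule pred_pair_set_borel) (unfold rmax_def Afun_def, measurable)

lemma measure_chan_Un_le:
  assumes "A \<in> sets (borel \<Otimes>\<^sub>M borel)" "B \<in> sets (borel \<Otimes>\<^sub>M borel)"
    and "measure (chan l1 l2) A \<le> a" "measure (chan l1 l2) B \<le> b"
  shows "measure (chan l1 l2) (A \<union> B) \<le> a + b"
  using measure_Un_le[of A "chan l1 l2" B] assms by simp

lemma measure_chan_mono:
  assumes "0 < l1" "0 < l2" "A \<subseteq> B" "B \<in> sets (borel \<Otimes>\<^sub>M borel)"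
  shows "measure (chan l1 l2) A \<le> measure (chan l1 l2) B"
  using finite_measure.finite_measure_mono[OF finite_measure_chan] assms by simp

lemma out_loss_le_measure:
  assumes l1: "0 < l1" and l2: "0 < l2" and S: "S \<in> sets (borel \<Otimes>\<^sub>M borel)"
    and cover: "\<And>h1 h2. 0 < h1 \<Longrightarrow> 0 < h2 \<Longrightarrow> rq P \<Delta> T h1 h2 < rth \<Longrightarrow> \<not> rmax P h1 h2 < rth
      \<Longrightarrow> (h1, h2) \<in> S"
  shows "out_loss l1 l2 P rth \<Delta> T \<le> measure (chan l1 l2) S"
proof -
  let ?\<mu> = "measure (chan l1 l2)" and ?Q = "{(h1, h2). rq P \<Delta> T h1 h2 < rth}"
    and ?R = "{(h1, h2). rmax P h1 h2 < rth}" and ?Z = "{(x::real, y::real). x \<le> 0 \<or> y \<le> 0}"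
  have R: "?R \<in> sets (borel \<Otimes>\<^sub>M borel)"
    by (rule rmax_less_set_measurable)
  have Z: "?Z \<in> sets (borel \<Otimes>\<^sub>M borel)"
    by (rule pred_pair_set_borel) measurable
  have "?Q \<subseteq> S \<union> ?Z \<union> ?R"
  proof
    fix z
    assume "z \<in> ?Q"
    then obtain h1 h2 where z: "z = (h1, h2)" and q: "rq P \<Delta> T h1 h2 < rth"
      by auto
    show "z \<in> S \<union> ?Z \<union> ?R"
      using cover[OF _ _ q] unfolding z by (cases "0 < h1 \<and> 0 < h2") auto
  qed
  then have "?\<mu> ?Q \<le> ?\<mu> (S \<union> ?Z \<union> ?R)"
    using S R Z by (intro measure_chan_mono l1 l2) auto
  also have "\<dots> \<le> ?\<mu> S + 0 + ?\<mu> ?R"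
    using S R Z by (intro measure_chan_Un_le) (auto simp: measure_def emeasure_chan_nonpos_null)
  finally show ?thesis
    unfolding out_loss_def out_q_def out_min_def by simp
qed

definition zone_strips :: "real \<Rightarrow> real \<Rightarrow> real \<Rightarrow> (real \<times> real) set" where
  "zone_strips P \<gamma> \<Delta> =
     {(x, y). \<gamma> / P \<le> x \<and> max 0 (x - \<Delta>) \<le> y \<and> y \<le> max 0 (x - \<Delta>) + 2 * \<Delta>}
   \<union> {(x, y). \<gamma> / P \<le> y \<and> 0 \<le> x \<and> x \<le> 2 * (1 + \<gamma>) * \<Delta>}
   \<union> {(x, y). \<gamma> / P \<le> x \<and> 0 \<le> y \<and> y \<le> 2 * (1 + \<gamma>) * \<Delta>}
   \<union> {(x, y). \<gamma> / P \<le> x \<and> max 0 (outage_curve P \<gamma> x) \<le> y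
        \<and> y \<le> max 0 (outage_curve P \<gamma> x) + 6 * (1 + \<gamma>) * (\<gamma> + 2) * \<Delta>}
   \<union> {(x, y). \<gamma> / P \<le> y \<and> max 0 (outage_curve P \<gamma> y) \<le> x
        \<and> x \<le> max 0 (outage_curve P \<gamma> y) + 6 * (1 + \<gamma>) * (\<gamma> + 2) * \<Delta>}"

lemma outage_curve_measurable [measurable]: "outage_curve P \<gamma> \<in> borel_measurable borel"
  unfolding outage_curve_def by measurable

lemma zone_strips_measurable: "zone_strips P \<gamma> \<Delta> \<in> sets (borel \<Otimes>\<^sub>M borel)"
  unfolding zone_strips_def by (intro sets.Un) (rule pred_pair_set_borel, measurable)+

lemma near_outage_curve_nonneg:
  "near_outage_curve P \<gamma> \<Delta> x y \<Longrightarrow> 0 < x \<Longrightarrow> 0 < \<gamma> \<Longrightarrow> max 0 (outage_curve P \<gamma> x) = outage_curve P \<gamma> x"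
  unfolding near_outage_curve_def outage_curve_def by simp

lemma loss_zone_in_zone_strips:
  assumes P: "0 < P" and g: "0 < \<gamma>" and x: "\<gamma> / P \<le> x" and y: "\<gamma> / P \<le> y"
    and xM: "x \<le> M" and yM: "y \<le> M" and zone: "loss_zone P \<gamma> \<Delta> M x y"
  shows "(x, y) \<in> zone_strips P \<gamma> \<Delta>"
proof -
  have x0: "0 < x" and y0: "0 < y"
    using x y P g by (auto intro: less_le_trans[rotated])
  consider "\<bar>x - y\<bar> < \<Delta>" | "x < 2 * (1 + \<gamma>) * \<Delta>" | "y < 2 * (1 + \<gamma>) * \<Delta>"
    | "near_outage_curve P \<gamma> \<Delta> x y" | "near_outage_curve P \<gamma> \<Delta> y x"
    using zone xM yM unfolding loss_zone_def by linarith
  then show ?thesis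
  proof cases
    case 1
    then have "max 0 (x - \<Delta>) \<le> y \<and> y \<le> max 0 (x - \<Delta>) + 2 * \<Delta>"
      using y0 by (simp add: max_def abs_less_iff)
    then show ?thesis
      unfolding zone_strips_def using x by blast
  next
    case 2
    then show ?thesis
      unfolding zone_strips_def using y x0 by simp
  next
    case 3
    then show ?thesis
      unfolding zone_strips_def using x y0 by simp
  next
    case 4
    have "max 0 (outage_curve P \<gamma> x) \<le> y \<and> y \<le> max 0 (outage_curve P \<gamma> x) + 6 * (1 + \<gamma>) * (\<gamma> + 2) * \<Delta>"
      unfolding near_outage_curve_nonneg[OF 4 x0 g] using 4 by (simp add: near_outage_curve_def)
    then show ?thesis
      unfolding zone_strips_def using x by blast
  next
    case 5
    have "max 0 (outage_curve P \<gamma> y) \<le> x \<and> x \<le> max 0 (outage_curve P \<gamma> y) + 6 * (1 + \<gamma>) * (\<gamma> + 2) * \<Delta>"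
      unfolding near_outage_curve_nonneg[OF 5 y0 g] using 5 by (simp add: near_outage_curve_def)
    then show ?thesis
      unfolding zone_strips_def using y by blast
  qed
qed

definition strips_const :: "real \<Rightarrow> real \<Rightarrow> real" where
  "strips_const \<gamma> l2 = (2 + 4 * (1 + \<gamma>) + 12 * (1 + \<gamma>) * (\<gamma> + 2)) / l2"

lemma strips_const_nonneg: "0 < \<gamma> \<Longrightarrow> 0 < l2 \<Longrightarrow> 0 \<le> strips_const \<gamma> l2"
  unfolding strips_const_def by simp

lemma measure_zone_strips:
  assumes l12: "l2 \<le> l1" and l2: "0 < l2" and P: "0 < P" and g: "0 < \<gamma>" and D: "0 < \<Delta>"
  shows "measure (chan l1 l2) (zone_strips P \<gamma> \<Delta>) \<le> exp (- \<gamma> / P / l1) * \<Delta> * strips_const \<gamma> l2"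
proof -
  have p0: "0 \<le> \<gamma> / P"
    using P g by simp
  let ?e = "exp (- \<gamma> / P / l1)" and ?K1 = "2 * (1 + \<gamma>) * \<Delta>" and ?K2 = "6 * (1 + \<gamma>) * (\<gamma> + 2) * \<Delta>"
  have K: "0 \<le> 2 * \<Delta>" "0 \<le> ?K1" "0 \<le> ?K2"
    using g D by simp_all
  note vertical = measure_chan_strip_vertical[OF l12 l2 p0 order_refl]
    and horizontal = measure_chan_strip_horizontal[OF l12 l2 p0 order_refl]
  have bounds:
    "measure (chan l1 l2) {(x, y). \<gamma> / P \<le> x \<and> max 0 (x - \<Delta>) \<le> y \<and> y \<le> max 0 (x - \<Delta>) + 2 * \<Delta>}
      \<le> ?e * (2 * \<Delta>) / l2"
    "measure (chan l1 l2) {(x, y). \<gamma> / P \<le> y \<and> 0 \<le> x \<and> x \<le> ?K1} \<le> ?e * ?K1 / l2"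
    "measure (chan l1 l2) {(x, y). \<gamma> / P \<le> x \<and> 0 \<le> y \<and> y \<le> ?K1} \<le> ?e * ?K1 / l2"
    "measure (chan l1 l2) {(x, y). \<gamma> / P \<le> x \<and> max 0 (outage_curve P \<gamma> x) \<le> y
      \<and> y \<le> max 0 (outage_curve P \<gamma> x) + ?K2} \<le> ?e * ?K2 / l2"
    "measure (chan l1 l2) {(x, y). \<gamma> / P \<le> y \<and> max 0 (outage_curve P \<gamma> y) \<le> x
      \<and> x \<le> max 0 (outage_curve P \<gamma> y) + ?K2} \<le> ?e * ?K2 / l2"
    using vertical[OF K(1), of "\<lambda>x. max 0 (x - \<Delta>)"] horizontal[OF K(2), of "\<lambda>_. 0"]
      vertical[OF K(2), of "\<lambda>_. 0"] vertical[OF K(3), of "\<lambda>x. max 0 (outage_curve P \<gamma> x)"]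
      horizontal[OF K(3), of "\<lambda>y. max 0 (outage_curve P \<gamma> y)"]
    by simp_all
  have strip_sets:
    "{(x, y). \<gamma> / P \<le> x \<and> max 0 (x - \<Delta>) \<le> y \<and> y \<le> max 0 (x - \<Delta>) + 2 * \<Delta>} \<in> sets (borel \<Otimes>\<^sub>M borel)"
    "{(x, y). \<gamma> / P \<le> y \<and> 0 \<le> x \<and> x \<le> ?K1} \<in> sets (borel \<Otimes>\<^sub>M borel)"
    "{(x, y). \<gamma> / P \<le> x \<and> 0 \<le> y \<and> y \<le> ?K1} \<in> sets (borel \<Otimes>\<^sub>M borel)"
    "{(x, y). \<gamma> / P \<le> x \<and> max 0 (outage_curve P \<gamma> x) \<le> y
      \<and> y \<le> max 0 (outage_curve P \<gamma> x) + ?K2} \<in> sets (borel \<Otimes>\<^sub>M borel)"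
    "{(x, y). \<gamma> / P \<le> y \<and> max 0 (outage_curve P \<gamma> y) \<le> x
      \<and> x \<le> max 0 (outage_curve P \<gamma> y) + ?K2} \<in> sets (borel \<Otimes>\<^sub>M borel)"
    by (rule pred_pair_set_borel, measurable)+
  have "measure (chan l1 l2) (zone_strips P \<gamma> \<Delta>)
      \<le> ?e * (2 * \<Delta>) / l2 + ?e * ?K1 / l2 + ?e * ?K1 / l2 + ?e * ?K2 / l2 + ?e * ?K2 / l2"
    unfolding zone_strips_def by (intro measure_chan_Un_le sets.Un strip_sets bounds)
  also have "\<dots> = ?e * \<Delta> * strips_const \<gamma> l2"
    unfolding strips_const_def using l2 by (simp add: field_simps)
  finally show ?thesis .
qed

definition loss_region :: "real \<Rightarrow> real \<Rightarrow> real \<Rightarrow> real \<Rightarrow> (real \<times> real) set" where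
  "loss_region P \<gamma> \<Delta> M = {(x, y). \<gamma> / P \<le> x \<and> \<gamma> / P \<le> y \<and> loss_zone P \<gamma> \<Delta> M x y}"

lemma loss_region_measurable: "loss_region P \<gamma> \<Delta> M \<in> sets (borel \<Otimes>\<^sub>M borel)"
  unfolding loss_region_def loss_zone_def near_outage_curve_def
  by (rule pred_pair_set_borel) measurable

lemma le_sqrt_of_le_one:
  fixes x :: real
  assumes "0 \<le> x" "x \<le> 1"
  shows "x \<le> sqrt x"
proof -
  have "sqrt x * sqrt x \<le> sqrt x"
    using assms by (intro mult_left_le) auto
  then show ?thesis
    using assms by simp
qed

lemma measure_loss_region:
  assumes l12: "l2 \<le> l1" and l2: "0 < l2" and P: "0 < P" and g: "0 < \<gamma>" and D: "0 < \<Delta>" and D1: "\<Delta> \<le> 1"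
    and M: "0 \<le> M" and tail: "exp (- M / l1) \<le> sqrt \<Delta>"
  shows "measure (chan l1 l2) (loss_region P \<gamma> \<Delta> M)
    \<le> exp (- \<gamma> / P / l1) * sqrt \<Delta> * (2 + strips_const \<gamma> l2)"
proof -
  have l1: "0 < l1" and p0: "0 \<le> \<gamma> / P"
    using l12 l2 P g by simp_all
  let ?e = "exp (- \<gamma> / P / l1)" and ?C = "strips_const \<gamma> l2"
  have "exp (- (M + \<gamma> / P) / l1) = exp (- M / l1) * ?e"
    by (simp add: diff_divide_distrib exp_diff exp_minus field_simps)
  then have quadrant: "exp (- (M + \<gamma> / P) / l1) \<le> sqrt \<Delta> * ?e" "exp (- (\<gamma> / P + M) / l1) \<le> sqrt \<Delta> * ?e"
    using tail by (simp_all add: add.commute)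
  have "?e * \<Delta> * ?C \<le> ?e * sqrt \<Delta> * ?C"
    using le_sqrt_of_le_one[of \<Delta>] D D1 strips_const_nonneg[OF g l2]
    by (intro mult_left_mono mult_right_mono) auto
  then have strips: "measure (chan l1 l2) (zone_strips P \<gamma> \<Delta>) \<le> ?e * sqrt \<Delta> * ?C"
    using measure_zone_strips[OF l12 l2 P g D] by linarith
  have "loss_region P \<gamma> \<Delta> M
      \<subseteq> {(x, y). M \<le> x \<and> \<gamma> / P \<le> y} \<union> {(x, y). \<gamma> / P \<le> x \<and> M \<le> y} \<union> zone_strips P \<gamma> \<Delta>"
  proof
    fix z
    assume "z \<in> loss_region P \<gamma> \<Delta> M"
    then obtain x y where z: "z = (x, y)" and x: "\<gamma> / P \<le> x" and y: "\<gamma> / P \<le> y"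
      and zone: "loss_zone P \<gamma> \<Delta> M x y"
      unfolding loss_region_def by auto
    show "z \<in> {(x, y). M \<le> x \<and> \<gamma> / P \<le> y} \<union> {(x, y). \<gamma> / P \<le> x \<and> M \<le> y} \<union> zone_strips P \<gamma> \<Delta>"
      using loss_zone_in_zone_strips[OF P g x y _ _ zone] x y unfolding z by (cases "M < x \<or> M < y") auto
  qed
  moreover have quadrant_sets: "{(x, y). M \<le> x \<and> \<gamma> / P \<le> y} \<in> sets (borel \<Otimes>\<^sub>M borel)"
    "{(x, y). \<gamma> / P \<le> x \<and> M \<le> y} \<in> sets (borel \<Otimes>\<^sub>M borel)"
    by (rule pred_pair_set_borel, measurable)+
  ultimately have "measure (chan l1 l2) (loss_region P \<gamma> \<Delta> M)
      \<le> measure (chan l1 l2) ({(x, y). M \<le> x \<and> \<gamma> / P \<le> y} \<union> {(x, y). \<gamma> / P \<le> x \<and> M \<le> y}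
          \<union> zone_strips P \<gamma> \<Delta>)"
    by (intro measure_chan_mono l1 l2 sets.Un zone_strips_measurable)
  also have "\<dots> \<le> sqrt \<Delta> * ?e + sqrt \<Delta> * ?e + ?e * sqrt \<Delta> * ?C"
    using measure_chan_quadrant[OF l12 l2 p0, of M] measure_chan_quadrant[OF l12 l2 M, of "\<gamma> / P"] quadrant
    by (intro measure_chan_Un_le sets.Un zone_strips_measurable quadrant_sets strips) simp_all
  finally show ?thesis
    by (simp add: algebra_simps)
qed

definition cross_strips :: "real \<Rightarrow> real \<Rightarrow> real \<Rightarrow> (real \<times> real) set" where
  "cross_strips t0 c w =
     {(x, y). t0 \<le> y \<and> c \<le> x \<and> x \<le> c + w} \<union> {(x, y). t0 \<le> x \<and> c \<le> y \<and> y \<le> c + w}"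

lemma cross_strips_measurable: "cross_strips t0 c w \<in> sets (borel \<Otimes>\<^sub>M borel)"
  unfolding cross_strips_def by (intro sets.Un) (rule pred_pair_set_borel, measurable)+

lemma measure_cross_strips:
  assumes l12: "l2 \<le> l1" and l2: "0 < l2" and t0: "0 \<le> t0" and c: "0 \<le> c" and w: "0 \<le> w"
  shows "measure (chan l1 l2) (cross_strips t0 c w) \<le> 2 * (exp (- (t0 + c) / l1) * w / l2)"
  unfolding cross_strips_def mult_2
  using measure_chan_strip_horizontal[OF l12 l2 t0 c w, of "\<lambda>_. c"]
    measure_chan_strip_vertical[OF l12 l2 t0 c w, of "\<lambda>_. c"]
  by (intro measure_chan_Un_le) (simp_all, (rule pred_pair_set_borel, measurable)+)

lemma loss_region_low_snr_subset:
  assumes P: "0 < P" and g: "0 < \<gamma>"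
  shows "loss_region P \<gamma> \<Delta> M \<inter> {(x, y). x \<le> r \<or> y \<le> r}
    \<subseteq> cross_strips M 0 r \<union> cross_strips 0 M r \<union> (zone_strips P \<gamma> \<Delta> \<inter> cross_strips 0 0 r)"
proof
  fix z
  assume "z \<in> loss_region P \<gamma> \<Delta> M \<inter> {(x, y). x \<le> r \<or> y \<le> r}"
  then obtain x y where z: "z = (x, y)" and x: "\<gamma> / P \<le> x" and y: "\<gamma> / P \<le> y"
    and zone: "loss_zone P \<gamma> \<Delta> M x y" and low: "x \<le> r \<or> y \<le> r"
    unfolding loss_region_def by auto
  have "0 < \<gamma> / P"
    using P g by simp
  then have "0 \<le> x" "0 \<le> y"
    using x y by linarith+
  consider "M < x \<or> M < y" | "x \<le> M" "y \<le> M"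
    by linarith
  then show "z \<in> cross_strips M 0 r \<union> cross_strips 0 M r \<union> (zone_strips P \<gamma> \<Delta> \<inter> cross_strips 0 0 r)"
  proof cases
    case 1
    then show ?thesis
      using low \<open>0 \<le> x\<close> \<open>0 \<le> y\<close> unfolding z cross_strips_def by auto
  next
    case 2
    then show ?thesis
      using loss_zone_in_zone_strips[OF P g x y _ _ zone] low \<open>0 \<le> x\<close> \<open>0 \<le> y\<close>
      unfolding z cross_strips_def by auto
  qed
qed

lemma measure_loss_region_low_snr:
  assumes l12: "l2 \<le> l1" and l2: "0 < l2" and P: "0 < P" and g: "0 < \<gamma>" and D: "0 < \<Delta>"
    and M: "0 \<le> M" and tail: "exp (- M / l1) \<le> sqrt \<Delta>" and r: "0 \<le> r"
  shows "measure (chan l1 l2) (loss_region P \<gamma> \<Delta> M \<inter> {(x, y). x \<le> r \<or> y \<le> r})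
    \<le> 4 * sqrt \<Delta> * r / l2 + min (strips_const \<gamma> l2 * \<Delta>) (2 * r / l2)"
proof -
  have l1: "0 < l1"
    using l12 l2 by simp
  let ?\<mu> = "measure (chan l1 l2)" and ?Z = "zone_strips P \<gamma> \<Delta>"
  have "2 * (exp (- M / l1) * r / l2) \<le> 2 * sqrt \<Delta> * r / l2"
    using tail r l2 by (simp add: divide_right_mono mult_right_mono)
  then have far: "?\<mu> (cross_strips M 0 r) \<le> 2 * sqrt \<Delta> * r / l2"
    "?\<mu> (cross_strips 0 M r) \<le> 2 * sqrt \<Delta> * r / l2"
    using measure_cross_strips[OF l12 l2 M order_refl r] measure_cross_strips[OF l12 l2 order_refl M r]
    by simp_all
  have "exp (- \<gamma> / P / l1) * (\<Delta> * strips_const \<gamma> l2) \<le> \<Delta> * strips_const \<gamma> l2"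
    using strips_const_nonneg[OF g l2] D l1 g P by (intro mult_left_le_one_le) auto
  then have "?\<mu> ?Z \<le> strips_const \<gamma> l2 * \<Delta>"
    using measure_zone_strips[OF l12 l2 P g D] by (simp add: ac_simps)
  moreover have "?\<mu> (?Z \<inter> cross_strips 0 0 r) \<le> ?\<mu> ?Z"
    "?\<mu> (?Z \<inter> cross_strips 0 0 r) \<le> ?\<mu> (cross_strips 0 0 r)"
    by (intro measure_chan_mono l1 l2 zone_strips_measurable cross_strips_measurable; blast)+
  moreover have "?\<mu> (cross_strips 0 0 r) \<le> 2 * r / l2"
    using measure_cross_strips[OF l12 l2 order_refl order_refl r] by simp
  ultimately have near: "?\<mu> (?Z \<inter> cross_strips 0 0 r) \<le> min (strips_const \<gamma> l2 * \<Delta>) (2 * r / l2)"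
    by linarith
  have "?\<mu> (loss_region P \<gamma> \<Delta> M \<inter> {(x, y). x \<le> r \<or> y \<le> r})
      \<le> ?\<mu> (cross_strips M 0 r \<union> cross_strips 0 M r \<union> (?Z \<inter> cross_strips 0 0 r))"
    using loss_region_low_snr_subset[OF P g]
    by (intro measure_chan_mono l1 l2 sets.Un sets.Int cross_strips_measurable zone_strips_measurable)
  also have "\<dots> \<le> 2 * sqrt \<Delta> * r / l2 + 2 * sqrt \<Delta> * r / l2 + min (strips_const \<gamma> l2 * \<Delta>) (2 * r / l2)"
    by (intro measure_chan_Un_le sets.Un sets.Int cross_strips_measurable zone_strips_measurable near far)
  finally show ?thesis
    by (simp add: ac_simps)
qed

section \<open>Low and high power\<close>

lemma far_strips_term_le:
  assumes P: "0 < P" and D: "0 < \<Delta>" and D1: "\<Delta> \<le> 1" and g: "0 \<le> \<gamma>" and l2: "0 < l2" and C0: "0 \<le> C0"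
  shows "4 * sqrt \<Delta> * ((C0 + 3 * \<gamma> * sqrt (\<Delta> * P)) / P) / l2
    \<le> 4 * (C0 + 3 * \<gamma>) / l2 * sqrt \<Delta> * (1 + sqrt P) / P"
proof -
  let ?s = "sqrt \<Delta>" and ?q = "sqrt P"
  have s: "0 < ?s" "?s \<le> 1" and q: "0 < ?q"
    using D D1 P by simp_all
  have "3 * \<gamma> * ?s * ?q \<le> 3 * \<gamma> * 1 * ?q"
    using s g q by (intro mult_right_mono mult_left_mono) auto
  moreover have "0 \<le> C0 * ?q" "0 \<le> 3 * \<gamma>"
    using C0 q g by simp_all
  moreover have "(C0 + 3 * \<gamma>) * (1 + ?q) = C0 + C0 * ?q + 3 * \<gamma> + 3 * \<gamma> * ?q"
    by (simp add: algebra_simps)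
  ultimately have "C0 + 3 * \<gamma> * sqrt (\<Delta> * P) \<le> (C0 + 3 * \<gamma>) * (1 + ?q)"
    by (simp add: real_sqrt_mult)
  then have "4 * ?s * (C0 + 3 * \<gamma> * sqrt (\<Delta> * P)) / (l2 * P) \<le> 4 * ?s * ((C0 + 3 * \<gamma>) * (1 + ?q)) / (l2 * P)"
    using s l2 P by (intro divide_right_mono mult_left_mono) auto
  then show ?thesis
    by (simp add: field_simps)
qed

lemma min_le_sqrt_mult:
  fixes a b :: real
  assumes "0 \<le> a" "0 \<le> b"
  shows "min a b \<le> sqrt (a * b)"
proof -
  have "min a b * min a b \<le> a * b"
    using assms by (simp add: min_def mult_mono mult_left_mono)
  then have "sqrt (min a b * min a b) \<le> sqrt (a * b)"
    by (rule real_sqrt_le_mono)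
  then show ?thesis
    using assms by simp
qed

lemma near_strips_term_le:
  assumes P: "0 < P" and D: "0 < \<Delta>" and g: "0 \<le> \<gamma>" and l2: "0 < l2" and C: "0 \<le> C" and C0: "0 \<le> C0"
  shows "min (C * \<Delta>) (2 * ((C0 + 3 * \<gamma> * sqrt (\<Delta> * P)) / P) / l2)
    \<le> (sqrt (2 * C * C0 / l2) + 6 * \<gamma> / l2) * sqrt \<Delta> * (1 + sqrt P) / P"
proof -
  let ?s = "sqrt \<Delta>" and ?q = "sqrt P"
  have s: "0 < ?s" and q: "0 < ?q" and Dq: "\<Delta> = ?s * ?s" and Pq: "P = ?q * ?q"
    using D P by simp_all
  have "2 * ((C0 + 3 * \<gamma> * sqrt (\<Delta> * P)) / P) / l2 = 2 * C0 / (l2 * P) + 6 * \<gamma> * ?s * ?q / (l2 * P)"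
    by (simp add: real_sqrt_mult field_simps add_divide_distrib)
  moreover have "0 \<le> 6 * \<gamma> * ?s * ?q / (l2 * P)"
    using g s q l2 P by simp
  ultimately have split: "min (C * \<Delta>) (2 * ((C0 + 3 * \<gamma> * sqrt (\<Delta> * P)) / P) / l2)
      \<le> min (C * \<Delta>) (2 * C0 / (l2 * P)) + 6 * \<gamma> * ?s * ?q / (l2 * P)"
    by (simp add: min_def)
  have "min (C * \<Delta>) (2 * C0 / (l2 * P)) \<le> sqrt (C * \<Delta> * (2 * C0 / (l2 * P)))"
    using C C0 D l2 P by (intro min_le_sqrt_mult) auto
  also have "C * \<Delta> * (2 * C0 / (l2 * P)) = (2 * C * C0 / l2) * (?s / ?q)^2"
    unfolding power2_eq_square using q l2 by (subst (1) Dq, subst (1) Pq) (simp add: field_simps)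
  also have "sqrt \<dots> = sqrt (2 * C * C0 / l2) * sqrt ((?s / ?q)^2)"
    by (rule real_sqrt_mult)
  also have "\<dots> = sqrt (2 * C * C0 / l2) * (?s / ?q)"
    using s q by simp
  finally have "min (C * \<Delta>) (2 * ((C0 + 3 * \<gamma> * sqrt (\<Delta> * P)) / P) / l2)
      \<le> sqrt (2 * C * C0 / l2) * (?s / ?q) + 6 * \<gamma> * ?s * ?q / (l2 * P)"
    using split by linarith
  also have "\<dots> = (sqrt (2 * C * C0 / l2) + 6 * \<gamma> / l2) * ?s * ?q / P"
    using q l2 by (subst (1 2) Pq) (simp add: field_simps)
  also have "\<dots> \<le> (sqrt (2 * C * C0 / l2) + 6 * \<gamma> / l2) * ?s * (1 + ?q) / P"
    using C C0 g l2 s P by (intro divide_right_mono mult_left_mono) auto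
  finally show ?thesis .
qed

lemma out_loss_small_power:
  assumes l12: "l2 \<le> l1" and l2: "0 < l2" and rth: "0 < rth" and P: "0 < P"
    and D: "0 < \<Delta>" and D1: "\<Delta> \<le> 1" and T: "0 \<le> T" and tail: "exp (- T * \<Delta> / l1) \<le> sqrt \<Delta>"
    and g: "\<gamma> = 2 powr rth - 1"
  shows "out_loss l1 l2 P rth \<Delta> T \<le> exp (- \<gamma> / P / l1) * sqrt \<Delta> * (2 + strips_const \<gamma> l2)"
proof -
  have l1: "0 < l1" and g0: "0 < \<gamma>" and M: "0 \<le> T * \<Delta>"
    using l12 l2 g rth T D by simp_all
  have "out_loss l1 l2 P rth \<Delta> T \<le> measure (chan l1 l2) (loss_region P \<gamma> \<Delta> (T * \<Delta>))"
    using loss_event[OF P rth D T _ _ g] unfolding loss_region_def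
    by (intro out_loss_le_measure l1 l2 loss_region_measurable[unfolded loss_region_def]) auto
  also have "\<dots> \<le> exp (- \<gamma> / P / l1) * sqrt \<Delta> * (2 + strips_const \<gamma> l2)"
    using tail by (intro measure_loss_region l12 l2 P g0 D D1 M) simp
  finally show ?thesis .
qed

definition large_power_const :: "real \<Rightarrow> real \<Rightarrow> real" where
  "large_power_const \<gamma> l2 =
     4 * (snr_const \<gamma> + 3 * \<gamma>) / l2 + sqrt (2 * strips_const \<gamma> l2 * snr_const \<gamma> / l2) + 6 * \<gamma> / l2"

lemma large_power_const_nonneg: "0 < \<gamma> \<Longrightarrow> 0 < l2 \<Longrightarrow> 0 \<le> large_power_const \<gamma> l2"
  unfolding large_power_const_def snr_const_def using strips_const_nonneg[of \<gamma> l2] by simp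

lemma out_loss_large_power:
  assumes l12: "l2 \<le> l1" and l2: "0 < l2" and rth: "0 < rth" and P: "0 < P"
    and D: "0 < \<Delta>" and D1: "\<Delta> \<le> 1" and T: "0 \<le> T" and tail: "exp (- T * \<Delta> / l1) \<le> sqrt \<Delta>"
    and g: "\<gamma> = 2 powr rth - 1" and large: "4 * (1 + \<gamma>)^2 \<le> P * (T * \<Delta> + \<Delta>)"
  shows "out_loss l1 l2 P rth \<Delta> T \<le> large_power_const \<gamma> l2 * sqrt \<Delta> * (1 + sqrt P) / P"
proof -
  have l1: "0 < l1" and g0: "0 < \<gamma>" and M: "0 \<le> T * \<Delta>"
    using l12 l2 g rth T D by simp_all
  then have C0: "0 \<le> snr_const \<gamma>"
    unfolding snr_const_def by simp
  define r where "r = snr_bound P \<Delta> \<gamma> / P"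
  have r: "r = (snr_const \<gamma> + 3 * \<gamma> * sqrt (\<Delta> * P)) / P" and r0: "0 \<le> r"
    unfolding r_def snr_bound_def using P g0 D C0 by simp_all
  have low: "h \<le> r" if "P * h \<le> snr_bound P \<Delta> \<gamma>" for h
    using that P unfolding r_def by (simp add: pos_le_divide_eq mult.commute)
  have "out_loss l1 l2 P rth \<Delta> T \<le> measure (chan l1 l2) (loss_region P \<gamma> \<Delta> (T * \<Delta>) \<inter> {(x, y). x \<le> r \<or> y \<le> r})"
  proof (intro out_loss_le_measure l1 l2 sets.Int loss_region_measurable)
    show "{(x, y). x \<le> r \<or> y \<le> r} \<in> sets (borel \<Otimes>\<^sub>M borel)"
      by (rule pred_pair_set_borel) measurable
    fix h1 h2
    assume h: "0 < h1" "0 < h2" and q: "rq P \<Delta> T h1 h2 < rth" and r: "\<not> rmax P h1 h2 < rth"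
    from loss_event[OF P rth D T h g q r]
    show "(h1, h2) \<in> loss_region P \<gamma> \<Delta> (T * \<Delta>) \<inter> {(x, y). x \<le> r \<or> y \<le> r}"
      using large low unfolding loss_region_def by auto
  qed
  also have "\<dots> \<le> 4 * sqrt \<Delta> * r / l2 + min (strips_const \<gamma> l2 * \<Delta>) (2 * r / l2)"
    using tail by (intro measure_loss_region_low_snr l12 l2 P g0 D M r0) simp
  also have "\<dots> \<le> 4 * (snr_const \<gamma> + 3 * \<gamma>) / l2 * sqrt \<Delta> * (1 + sqrt P) / P
      + (sqrt (2 * strips_const \<gamma> l2 * snr_const \<gamma> / l2) + 6 * \<gamma> / l2) * sqrt \<Delta> * (1 + sqrt P) / P"
    unfolding r using g0
    by (intro add_mono far_strips_term_le[OF P D D1 _ l2 C0]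
        near_strips_term_le[OF P D _ l2 strips_const_nonneg[OF g0 l2] C0]) auto
  also have "\<dots> = large_power_const \<gamma> l2 * sqrt \<Delta> * (1 + sqrt P) / P"
    unfolding large_power_const_def using P l2 by (simp add: field_simps)
  finally show ?thesis .
qed

lemma saturation_level_eq:
  fixes l1 \<Delta> :: real
  assumes "0 < \<Delta>"
  shows "l1 / (2 * \<Delta>) * ln (1 / \<Delta>) * \<Delta> = l1 / 2 * ln (1 / \<Delta>)"
  using assms by simp

lemma exp_saturation_level:
  fixes l1 \<Delta> :: real
  assumes l1: "0 < l1" and D: "0 < \<Delta>"
  shows "exp (- (l1 / (2 * \<Delta>) * ln (1 / \<Delta>)) * \<Delta> / l1) = sqrt \<Delta>"
proof -
  have "- (l1 / (2 * \<Delta>) * ln (1 / \<Delta>)) * \<Delta> / l1 = - (l1 / 2 * ln (1 / \<Delta>)) / l1"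
    using saturation_level_eq[OF D, of l1] by simp
  also have "\<dots> = ln \<Delta> * (1 / 2)"
    using l1 D by (simp add: ln_div)
  finally have "exp (- (l1 / (2 * \<Delta>) * ln (1 / \<Delta>)) * \<Delta> / l1) = \<Delta> powr (1 / 2)"
    using D by (simp add: powr_def)
  then show ?thesis
    using D by (simp add: powr_half_sqrt)
qed

lemma saturation_level_ge:
  fixes l1 \<Delta> :: real
  assumes l1: "0 < l1" and D: "0 < \<Delta>" and D1: "\<Delta> \<le> 1"
  shows "min (exp (- 1)) (l1 / 2) \<le> l1 / (2 * \<Delta>) * ln (1 / \<Delta>) * \<Delta> + \<Delta>"
  unfolding saturation_level_eq[OF D]
proof (cases "exp (- 1) \<le> \<Delta>")
  case True
  have "0 \<le> l1 / 2 * ln (1 / \<Delta>)"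
    using l1 D D1 by simp
  then show "min (exp (- 1)) (l1 / 2) \<le> l1 / 2 * ln (1 / \<Delta>) + \<Delta>"
    using True by linarith
next
  case False
  then have "ln \<Delta> < ln (exp (- 1))"
    using D by (subst ln_less_cancel_iff) auto
  then have "1 < ln (1 / \<Delta>)"
    using D by (simp add: ln_div)
  then have "l1 / 2 < l1 / 2 * ln (1 / \<Delta>)"
    using l1 by simp
  then show "min (exp (- 1)) (l1 / 2) \<le> l1 / 2 * ln (1 / \<Delta>) + \<Delta>"
    using D by linarith
qed

lemma power_saturation_ge:
  fixes l1 \<Delta> c P :: real
  assumes l1: "0 < l1" and D: "0 < \<Delta>" and D1: "\<Delta> \<le> 1"
    and P: "max 1 (c / min (exp (- 1)) (l1 / 2)) < P"
  shows "c \<le> P * (l1 / (2 * \<Delta>) * ln (1 / \<Delta>) * \<Delta> + \<Delta>)"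
proof -
  have m0: "0 < min (exp (- 1)) (l1 / 2)"
    using l1 by simp
  have "c / min (exp (- 1)) (l1 / 2) < P"
    using P by simp
  then have "c \<le> P * min (exp (- 1)) (l1 / 2)"
    using m0 by (simp add: divide_less_eq mult.commute)
  also have "\<dots> \<le> P * (l1 / (2 * \<Delta>) * ln (1 / \<Delta>) * \<Delta> + \<Delta>)"
    using saturation_level_ge[OF l1 D D1] P by (intro mult_left_mono) auto
  finally show ?thesis .
qed

lemma two_regime_bound:
  fixes f :: "real \<Rightarrow> real \<Rightarrow> real"
  assumes CA: "0 < CA" and CB: "0 \<le> CB" and c: "0 < c" and Ps: "1 \<le> Ps"
    and small: "\<And>P \<Delta>. 0 < P \<Longrightarrow> 0 < \<Delta> \<Longrightarrow> \<Delta> \<le> 1 \<Longrightarrow> f P \<Delta> \<le> exp (- c / P) * sqrt \<Delta> * CA"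
    and large: "\<And>P \<Delta>. Ps < P \<Longrightarrow> 0 < \<Delta> \<Longrightarrow> \<Delta> \<le> 1 \<Longrightarrow> f P \<Delta> \<le> CB * sqrt \<Delta> * (1 + sqrt P) / P"
  shows "\<exists>C5 C6. C5 > 0 \<and> C6 > 0 \<and> (\<forall>P \<Delta>. P > 0 \<longrightarrow> 0 < \<Delta> \<longrightarrow> \<Delta> \<le> 1 \<longrightarrow>
    f P \<Delta> \<le> C5 * exp (- C6 / P) * (1 + sqrt P) / P * sqrt \<Delta>)"
proof (intro exI conjI allI impI)
  define C5 where "C5 = CA * Ps + CB * exp c"
  show "C5 > 0" "c > 0"
    unfolding C5_def using CA CB Ps c by (simp_all add: add_pos_nonneg)
  fix P \<Delta> :: real
  assume P: "P > 0" and D: "0 < \<Delta>" "\<Delta> \<le> 1"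
  have k: "0 \<le> sqrt \<Delta> * (1 + sqrt P) / P"
    using P D by simp
  show "f P \<Delta> \<le> C5 * exp (- c / P) * (1 + sqrt P) / P * sqrt \<Delta>"
  proof (cases "P \<le> Ps")
    case True
    have "CA \<le> CA * Ps / P"
      using CA True P by (simp add: le_divide_eq mult_left_mono)
    also have "\<dots> \<le> C5 / P"
      unfolding C5_def using CB P by (intro divide_right_mono) auto
    also have "\<dots> \<le> C5 * ((1 + sqrt P) / P)"
      using P \<open>C5 > 0\<close> by (simp add: divide_right_mono)
    finally have "exp (- c / P) * sqrt \<Delta> * CA \<le> exp (- c / P) * sqrt \<Delta> * (C5 * ((1 + sqrt P) / P))"
      using D by (intro mult_left_mono) auto
    then show ?thesis
      using small[OF P D] by (simp add: ac_simps)
  next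
    case False
    have "exp (- c) \<le> exp (- c / P)"
      using False Ps c by (simp add: divide_le_eq)
    then have "CB * exp c * exp (- c) \<le> CB * exp c * exp (- c / P)"
      using CB by (intro mult_left_mono) auto
    then have "CB \<le> CB * exp c * exp (- c / P)"
      by (simp add: mult.assoc exp_minus_inverse)
    also have "\<dots> \<le> C5 * exp (- c / P)"
      unfolding C5_def using CA Ps by (intro mult_right_mono) auto
    finally have "CB * (sqrt \<Delta> * (1 + sqrt P) / P) \<le> C5 * exp (- c / P) * (sqrt \<Delta> * (1 + sqrt P) / P)"
      using k by (rule mult_right_mono)
    then show ?thesis
      using large[of P \<Delta>] False D by (simp add: ac_simps)
  qed
qed

theorem corollary2:
  fixes l1 l2 rth :: real
  assumes "l1 \<ge> l2" and "l2 > 0" and "rth > 0"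
  shows "\<exists>C5 C6. C5 > 0 \<and> C6 > 0 \<and>
     (\<forall>P \<Delta>. P > 0 \<longrightarrow> 0 < \<Delta> \<longrightarrow> \<Delta> \<le> 1 \<longrightarrow>
        out_loss l1 l2 P rth \<Delta> (l1 / (2 * \<Delta>) * ln (1 / \<Delta>))
          \<le> C5 * exp (- C6 / P) * (1 + sqrt P) / P * sqrt \<Delta>)"
proof -
  define \<gamma> where "\<gamma> = 2 powr rth - 1"
  let ?T = "\<lambda>\<Delta>. l1 / (2 * \<Delta>) * ln (1 / \<Delta>)"
  have l1: "0 < l1" and g: "0 < \<gamma>"
    using assms unfolding \<gamma>_def by simp_all
  have T: "0 \<le> ?T \<Delta>" and tail: "exp (- ?T \<Delta> * \<Delta> / l1) \<le> sqrt \<Delta>" if "0 < \<Delta>" "\<Delta> \<le> 1" for \<Delta>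
    using that l1 exp_saturation_level[OF l1 that(1)] by simp_all
  show ?thesis
  proof (rule two_regime_bound[where f = "\<lambda>P \<Delta>. out_loss l1 l2 P rth \<Delta> (?T \<Delta>)"
        and CA = "2 + strips_const \<gamma> l2" and CB = "large_power_const \<gamma> l2" and c = "\<gamma> / l1"
        and Ps = "max 1 (4 * (1 + \<gamma>)^2 / min (exp (- 1)) (l1 / 2))"])
    show "out_loss l1 l2 P rth \<Delta> (?T \<Delta>) \<le> exp (- (\<gamma> / l1) / P) * sqrt \<Delta> * (2 + strips_const \<gamma> l2)"
      if "0 < P" "0 < \<Delta>" "\<Delta> \<le> 1" for P \<Delta>
      using out_loss_small_power[OF assms that T[OF that(2,3)] tail[OF that(2,3)] \<gamma>_def]
      by (simp add: ac_simps)
    show "out_loss l1 l2 P rth \<Delta> (?T \<Delta>) \<le> large_power_const \<gamma> l2 * sqrt \<Delta> * (1 + sqrt P) / P"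
      if "max 1 (4 * (1 + \<gamma>)^2 / min (exp (- 1)) (l1 / 2)) < P" "0 < \<Delta>" "\<Delta> \<le> 1" for P \<Delta>
      using out_loss_large_power[OF assms _ that(2,3) T[OF that(2,3)] tail[OF that(2,3)] \<gamma>_def
          power_saturation_ge[OF l1 that(2,3,1)]] that(1)
      by simp
  qed (use g l1 strips_const_nonneg[OF g assms(2)] large_power_const_nonneg[OF g assms(2)] in simp_all)
qed

end
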